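(* Let $m\geq3$ be odd, let $M(m)$ be the monoid with generators $\rho_1,\rho_2$ and the single relation $\rho_1\rho_2^{(m-1)/2}\rho_1=\rho_2^{(m+1)/2}$, and set $\Delta:=\rho_2^{\,m}$. Then $(M(m),\Delta)$ is a Garside monoid, and its group of fractions is the group $B(m)$ defined by the same presentation (which is isomorphic to the Artin–Tits group of dihedral type $I_2(m)$).
   Context: A Garside monoid is a pair $(M,\Delta)$ with $M$ a monoid and $\Delta\in M$ such that: (1) $M$ is left- and right-cancellative; (2) divisibility in $M$ is Noetherian, i.e. there is $\lambda:M\to\mathbb{Z}_{\geq 0}$ with $\lambda(ab)\geq\lambda(a)+\lambda(b)$ for all $a,b$ and $\lambda(a)\neq 0$ for $a\neq 1$; (3) any two elements of $M$ admit a left-lcm, a right-lcm, a left-gcd and a right-gcd (with respect to right- resp. left-divisibility as appropriate, where $a$ left-divides $c$ if $c=ab$ and $b$ right-divides $c$ if $c=ab$); (4) the left-divisors and the right-divisors of $\Delta$ coincide and generate $M$; (5) the set of divisors of $\Delta$ is finite. *)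

theory Defs
  imports "HOL-Algebra.Group"
begin

inductive_set pres_cong :: "('a list \<times> 'a list) set \<Rightarrow> ('a list \<times> 'a list) set"
  for R :: "('a list \<times> 'a list) set" where
  base: "(u, v) \<in> R \<Longrightarrow> (u, v) \<in> pres_cong R"
| refl: "(u, u) \<in> pres_cong R"
| sym: "(u, v) \<in> pres_cong R \<Longrightarrow> (v, u) \<in> pres_cong R"
| trans: "(u, v) \<in> pres_cong R \<Longrightarrow> (v, w) \<in> pres_cong R \<Longrightarrow> (u, w) \<in> pres_cong R"
| ctx: "(u, v) \<in> pres_cong R \<Longrightarrow> (x @ u @ y, x @ v @ y) \<in> pres_cong R"

definition pres_monoid :: "('a list \<times> 'a list) set \<Rightarrow> 'a list set monoid" where
  "pres_monoid R =
     \<lparr> carrier = UNIV // pres_cong R,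
       mult = (\<lambda>A B. pres_cong R `` {u @ v | u v. u \<in> A \<and> v \<in> B}),
       one = pres_cong R `` {[]} \<rparr>"

text \<open>Group presentation: letters (a, True) = a, (a, False) = a inverse;
  relations R plus the free-group cancellation relations.\<close>
definition group_rels :: "('a list \<times> 'a list) set \<Rightarrow> (('a \<times> bool) list \<times> ('a \<times> bool) list) set" where
  "group_rels R = {(map (\<lambda>a. (a, True)) u, map (\<lambda>a. (a, True)) v) | u v. (u, v) \<in> R}
                \<union> {([(a, b), (a, \<not> b)], []) | a b. True}"

definition pres_group :: "('a list \<times> 'a list) set \<Rightarrow> ('a \<times> bool) list set monoid" where
  "pres_group R = pres_monoid (group_rels R)"

definition pres_incl :: "('a list \<times> 'a list) set \<Rightarrow> 'a list set \<Rightarrow> ('a \<times> bool) list set" where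
  "pres_incl R A = pres_cong (group_rels R) `` (map (\<lambda>a. (a, True)) ` A)"

definition ldvd :: "('a, 'b) monoid_scheme \<Rightarrow> 'a \<Rightarrow> 'a \<Rightarrow> bool" where
  "ldvd M a c \<longleftrightarrow> (\<exists>b \<in> carrier M. c = a \<otimes>\<^bsub>M\<^esub> b)"

definition rdvd :: "('a, 'b) monoid_scheme \<Rightarrow> 'a \<Rightarrow> 'a \<Rightarrow> bool" where
  "rdvd M b c \<longleftrightarrow> (\<exists>a \<in> carrier M. c = a \<otimes>\<^bsub>M\<^esub> b)"

definition has_lcms_gcds :: "'a set \<Rightarrow> ('a \<Rightarrow> 'a \<Rightarrow> bool) \<Rightarrow> bool" where
  "has_lcms_gcds S P \<longleftrightarrow>
     (\<forall>a \<in> S. \<forall>b \<in> S.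
        (\<exists>c \<in> S. P a c \<and> P b c \<and> (\<forall>d \<in> S. P a d \<and> P b d \<longrightarrow> P c d)) \<and>
        (\<exists>c \<in> S. P c a \<and> P c b \<and> (\<forall>d \<in> S. P d a \<and> P d b \<longrightarrow> P d c)))"

definition garside_monoid :: "('a, 'b) monoid_scheme \<Rightarrow> 'a \<Rightarrow> bool" where
  "garside_monoid M \<Delta> \<longleftrightarrow>
     monoid M \<and> \<Delta> \<in> carrier M \<and>
     \<comment> \<open>(1) cancellativity\<close>
     (\<forall>a \<in> carrier M. \<forall>b \<in> carrier M. \<forall>c \<in> carrier M.
        (a \<otimes>\<^bsub>M\<^esub> b = a \<otimes>\<^bsub>M\<^esub> c \<longrightarrow> b = c) \<and>
        (b \<otimes>\<^bsub>M\<^esub> a = c \<otimes>\<^bsub>M\<^esub> a \<longrightarrow> b = c)) \<and>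
     \<comment> \<open>(2) Noetherian divisibility\<close>
     (\<exists>len :: 'a \<Rightarrow> nat.
        (\<forall>a \<in> carrier M. \<forall>b \<in> carrier M. len (a \<otimes>\<^bsub>M\<^esub> b) \<ge> len a + len b) \<and>
        (\<forall>a \<in> carrier M. a \<noteq> \<one>\<^bsub>M\<^esub> \<longrightarrow> len a \<noteq> 0)) \<and>
     \<comment> \<open>(3) lcms and gcds for both divisibility relations\<close>
     has_lcms_gcds (carrier M) (ldvd M) \<and>
     has_lcms_gcds (carrier M) (rdvd M) \<and>
     \<comment> \<open>(4) left and right divisors of Delta coincide and generate M\<close>
     {a \<in> carrier M. ldvd M a \<Delta>} = {a \<in> carrier M. rdvd M a \<Delta>} \<and>
     (\<forall>x \<in> carrier M. \<exists>l. set l \<subseteq> {a \<in> carrier M. ldvd M a \<Delta>} \<and>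
                            x = foldr (\<lambda>a b. a \<otimes>\<^bsub>M\<^esub> b) l \<one>\<^bsub>M\<^esub>) \<and>
     \<comment> \<open>(5) finitely many divisors of Delta\<close>
     finite {a \<in> carrier M. ldvd M a \<Delta>}"

definition group_of_fractions ::
  "('g, 'c) monoid_scheme \<Rightarrow> ('a, 'b) monoid_scheme \<Rightarrow> ('a \<Rightarrow> 'g) \<Rightarrow> bool" where
  "group_of_fractions G M i \<longleftrightarrow>
     group G \<and> i \<in> hom M G \<and> i \<one>\<^bsub>M\<^esub> = \<one>\<^bsub>G\<^esub> \<and> inj_on i (carrier M) \<and>
     (\<forall>g \<in> carrier G. \<exists>a \<in> carrier M. \<exists>b \<in> carrier M.
        g = i a \<otimes>\<^bsub>G\<^esub> inv\<^bsub>G\<^esub> (i b))"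

datatype gen2 = R1 | R2

definition rel_M :: "nat \<Rightarrow> (gen2 list \<times> gen2 list) set" where
  "rel_M m = {([R1] @ replicate ((m - 1) div 2) R2 @ [R1], replicate ((m + 1) div 2) R2)}"

definition M_mon :: "nat \<Rightarrow> gen2 list set monoid" where
  "M_mon m = pres_monoid (rel_M m)"

definition Delta :: "nat \<Rightarrow> gen2 list set" where
  "Delta m = pres_cong (rel_M m) `` {replicate m R2}"

definition B_grp :: "nat \<Rightarrow> (gen2 \<times> bool) list set monoid" where
  "B_grp m = pres_group (rel_M m)"

definition alt_word :: "'a \<Rightarrow> 'a \<Rightarrow> nat \<Rightarrow> 'a list" where
  "alt_word x y k = map (\<lambda>i. if even i then x else y) [0..<k]"

text \<open>Artin--Tits group of dihedral type I2(m): generators s = R1, t = R2,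
  relation sts... = tst... (m letters on each side).\<close>
definition artin_I2 :: "nat \<Rightarrow> (gen2 \<times> bool) list set monoid" where
  "artin_I2 m = pres_group {(alt_word R1 R2 m, alt_word R2 R1 m)}"

end

theory Submission
  imports Defs
begin

text \<open>
  Write \<Delta> = \<rho>2^m with m = 2k + 1. Every word over \<rho>1, \<rho>2 can be rewritten to a unique normal
  form \<rho>2^n (\<rho>1 \<rho>2^r1) \<dots> (\<rho>1 \<rho>2^rj) with all ri < m and ri \<noteq> k except possibly rj: powers
  \<rho>2^m are central and can be collected in front, and \<rho>1 \<rho>2^k \<rho>1 = \<rho>2^(k+1). The normal form is
  computed by a right action of the generators on such states; as \<rho>1 and \<rho>2 act bijectively,
  the action extends to B(m). This gives the word problem for M(m), right cancellation and the
  injectivity of M(m) \<rightarrow> B(m); left cancellation follows because the relation is invariant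
  under reversal of words. With the weight \<rho>1 \<mapsto> 1, \<rho>2 \<mapsto> 2 the relation is homogeneous. The normal
  form also shows that \<rho>2^(k+1) is the lcm of the atoms, and lcms of arbitrary elements follow by
  induction on the length of a common multiple (common multiples exist since every atom divides
  the central element \<Delta>); gcds come from lcms and the weight. Centrality of \<Delta> also turns every
  element of B(m) into a fraction a b\<inverse>. Finally \<rho>1 \<mapsto> s, \<rho>2 \<mapsto> s t and s \<mapsto> \<rho>1, t \<mapsto> \<rho>1\<inverse> \<rho>2
  are mutually inverse isomorphisms between B(m) and the Artin group of type I2(m).
\<close>

section \<open>Presented monoids and groups\<close>

abbreviation pres_class :: "('a list \<times> 'a list) set \<Rightarrow> 'a list \<Rightarrow> 'a list set" where
  "pres_class R w \<equiv> pres_cong R `` {w}"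

abbreviation pos_word :: "'a list \<Rightarrow> ('a \<times> bool) list" where
  "pos_word w \<equiv> map (\<lambda>a. (a, True)) w"

lemma equiv_pres_cong: "equiv UNIV (pres_cong R)"
  unfolding equiv_def
  by (auto simp: refl_on_def sym_def trans_def intro: pres_cong.intros)

lemma pres_class_eq_iff: "pres_class R u = pres_class R v \<longleftrightarrow> (u, v) \<in> pres_cong R"
  using eq_equiv_class_iff[OF equiv_pres_cong] by simp

lemma pres_cong_append:
  assumes "(u, u') \<in> pres_cong R" and "(v, v') \<in> pres_cong R"
  shows "(u @ v, u' @ v') \<in> pres_cong R"
proof -
  have "(u @ v, u' @ v) \<in> pres_cong R" using pres_cong.ctx[OF assms(1), of "[]" v] by simp
  moreover have "(u' @ v, u' @ v') \<in> pres_cong R" using pres_cong.ctx[OF assms(2), of u' "[]"] by simp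
  ultimately show ?thesis by (rule pres_cong.trans)
qed

lemma carrier_pres_monoid: "carrier (pres_monoid R) = range (pres_class R)"
  by (auto simp: pres_monoid_def quotient_def)

lemma one_pres_monoid: "\<one>\<^bsub>pres_monoid R\<^esub> = pres_class R []"
  by (simp add: pres_monoid_def)

lemma mult_pres_class:
  "pres_class R u \<otimes>\<^bsub>pres_monoid R\<^esub> pres_class R v = pres_class R (u @ v)"
proof -
  let ?S = "{u' @ v' |u' v'. u' \<in> pres_class R u \<and> v' \<in> pres_class R v}"
  have "u @ v \<in> ?S" by (auto intro: pres_cong.refl)
  moreover have "?S \<subseteq> pres_class R (u @ v)" by (auto intro: pres_cong_append)
  ultimately have "pres_cong R `` ?S = pres_class R (u @ v)"
    by (blast intro: pres_cong.trans)
  then show ?thesis by (simp add: pres_monoid_def)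
qed

lemma monoid_pres_monoid: "monoid (pres_monoid R)"
  by (rule monoidI) (auto simp: carrier_pres_monoid one_pres_monoid mult_pres_class)

lemma foldr_mult_pres_class:
  "foldr (\<lambda>a b. a \<otimes>\<^bsub>pres_monoid R\<^esub> b) (map (\<lambda>s. pres_class R [s]) w) \<one>\<^bsub>pres_monoid R\<^esub>
     = pres_class R w"
  by (induction w) (auto simp: one_pres_monoid mult_pres_class)

definition inverse_word :: "('a \<times> bool) list \<Rightarrow> ('a \<times> bool) list" where
  "inverse_word w = rev (map (\<lambda>(x, e). (x, \<not> e)) w)"

lemma pres_cong_cancel_letter: "([(a, e), (a, \<not> e)], []) \<in> pres_cong (group_rels R)"
  by (rule pres_cong.base) (auto simp: group_rels_def)

lemma pres_cong_inverse_word: "(inverse_word w @ w, []) \<in> pres_cong (group_rels R)"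
proof (induction w rule: rev_induct)
  case Nil
  then show ?case by (simp add: inverse_word_def pres_cong.refl)
next
  case (snoc l w)
  obtain a e where l: "l = (a, e)" by fastforce
  have "([(a, \<not> e)] @ (inverse_word w @ w) @ [(a, e)], [(a, \<not> e)] @ [] @ [(a, e)])
          \<in> pres_cong (group_rels R)"
    by (rule pres_cong.ctx[OF snoc])
  moreover have "([(a, \<not> e), (a, e)], []) \<in> pres_cong (group_rels R)"
    using pres_cong_cancel_letter[of a "\<not> e"] by simp
  ultimately show ?case
    using l by (auto simp: inverse_word_def intro: pres_cong.trans)
qed

lemma carrier_pres_group: "carrier (pres_group R) = range (pres_class (group_rels R))"
  by (simp add: pres_group_def carrier_pres_monoid)

lemma one_pres_group: "\<one>\<^bsub>pres_group R\<^esub> = pres_class (group_rels R) []"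
  by (simp add: pres_group_def one_pres_monoid)

lemma mult_pres_group:
  "pres_class (group_rels R) u \<otimes>\<^bsub>pres_group R\<^esub> pres_class (group_rels R) v
     = pres_class (group_rels R) (u @ v)"
  by (simp add: pres_group_def mult_pres_class)

lemma group_pres_group: "group (pres_group R)"
proof -
  interpret monoid "pres_group R" unfolding pres_group_def by (rule monoid_pres_monoid)
  show ?thesis
  proof (rule group_l_invI)
    fix x assume "x \<in> carrier (pres_group R)"
    then obtain w where x: "x = pres_class (group_rels R) w" by (auto simp: carrier_pres_group)
    have "pres_class (group_rels R) (inverse_word w) \<otimes>\<^bsub>pres_group R\<^esub> x = \<one>\<^bsub>pres_group R\<^esub>"
      using pres_cong_inverse_word[of w R]
      by (simp add: x mult_pres_group one_pres_group pres_class_eq_iff)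
    then show "\<exists>y\<in>carrier (pres_group R). y \<otimes>\<^bsub>pres_group R\<^esub> x = \<one>\<^bsub>pres_group R\<^esub>"
      by (auto simp: carrier_pres_group)
  qed
qed

lemma inv_pres_group_letter:
  "inv\<^bsub>pres_group R\<^esub> (pres_class (group_rels R) [(x, True)]) = pres_class (group_rels R) [(x, False)]"
proof -
  interpret group "pres_group R" by (rule group_pres_group)
  have "pres_class (group_rels R) [(x, False)] \<otimes>\<^bsub>pres_group R\<^esub> pres_class (group_rels R) [(x, True)]
          = \<one>\<^bsub>pres_group R\<^esub>"
    using pres_cong_cancel_letter[of x False R]
    by (simp add: mult_pres_group one_pres_group pres_class_eq_iff)
  then show ?thesis
    by (intro inv_equality) (auto simp: carrier_pres_group)
qed

lemma pres_cong_pos_word: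
  "(u, v) \<in> pres_cong R \<Longrightarrow> (pos_word u, pos_word v) \<in> pres_cong (group_rels R)"
proof (induction rule: pres_cong.induct)
  case (base u v)
  then show ?case by (intro pres_cong.base) (auto simp: group_rels_def)
next
  case (ctx u v x y)
  then show ?case using pres_cong.ctx[OF ctx.IH, of "pos_word x" "pos_word y"] by simp
qed (auto intro: pres_cong.intros)

lemma pres_incl_class: "pres_incl R (pres_class R w) = pres_class (group_rels R) (pos_word w)"
proof
  show "pres_incl R (pres_class R w) \<subseteq> pres_class (group_rels R) (pos_word w)"
    unfolding pres_incl_def by (blast intro: pres_cong.trans dest: pres_cong_pos_word)
  show "pres_class (group_rels R) (pos_word w) \<subseteq> pres_incl R (pres_class R w)"
    unfolding pres_incl_def by (blast intro: pres_cong.refl)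
qed

lemma pres_incl_hom: "pres_incl R \<in> hom (pres_monoid R) (pres_group R)"
  by (rule homI)
     (auto simp: carrier_pres_monoid carrier_pres_group pres_incl_class mult_pres_class
        mult_pres_group[symmetric])

lemma pres_incl_one: "pres_incl R \<one>\<^bsub>pres_monoid R\<^esub> = \<one>\<^bsub>pres_group R\<^esub>"
  by (simp add: one_pres_monoid one_pres_group pres_incl_class)

definition eval_word :: "('b, 'c) monoid_scheme \<Rightarrow> ('a \<Rightarrow> 'b) \<Rightarrow> ('a \<times> bool) list \<Rightarrow> 'b" where
  "eval_word H f w = foldr (\<lambda>(x, e) r. (if e then f x else inv\<^bsub>H\<^esub> (f x)) \<otimes>\<^bsub>H\<^esub> r) w \<one>\<^bsub>H\<^esub>"

lemma eval_word_Nil [simp]: "eval_word H f [] = \<one>\<^bsub>H\<^esub>"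
  by (simp add: eval_word_def)

lemma eval_word_Cons [simp]:
  "eval_word H f ((x, e) # w) = (if e then f x else inv\<^bsub>H\<^esub> (f x)) \<otimes>\<^bsub>H\<^esub> eval_word H f w"
  by (simp add: eval_word_def)

context group
begin

lemma eval_word_closed: "(\<And>x. f x \<in> carrier G) \<Longrightarrow> eval_word G f w \<in> carrier G"
  by (induction w) auto

lemma eval_word_append:
  "(\<And>x. f x \<in> carrier G) \<Longrightarrow> eval_word G f (u @ v) = eval_word G f u \<otimes> eval_word G f v"
  by (induction u) (auto simp: eval_word_closed m_assoc)

lemma eval_word_pos_replicate:
  "(\<And>x. f x \<in> carrier G) \<Longrightarrow> eval_word G f (pos_word (replicate j x)) = f x [^] j"
proof (induction j)
  case (Suc j)
  then show ?case using nat_pow_Suc2[of "f x" j] by simp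
qed simp

lemma eval_word_pos_concat_replicate:
  "(\<And>x. f x \<in> carrier G) \<Longrightarrow>
     eval_word G f (pos_word (concat (replicate j [x, y]))) = (f x \<otimes> f y) [^] j"
proof (induction j)
  case (Suc j)
  then show ?case using nat_pow_Suc2[of "f x \<otimes> f y" j] by (simp add: m_assoc)
qed simp

lemma eval_word_pres_cong:
  assumes f: "\<And>x. f x \<in> carrier G"
    and rel: "\<And>u v. (u, v) \<in> R \<Longrightarrow> eval_word G f (pos_word u) = eval_word G f (pos_word v)"
    and uv: "(u, v) \<in> pres_cong (group_rels R)"
  shows "eval_word G f u = eval_word G f v"
  using uv
proof (induction rule: pres_cong.induct)
  case (base u v)
  then show ?case by (auto simp: group_rels_def f rel)
next
  case (ctx u v x y)
  then show ?case by (simp add: eval_word_append f)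
qed auto

lemma hom_eval_word:
  assumes "group H" and "h \<in> hom G H" and f: "\<And>x. f x \<in> carrier G"
  shows "h (eval_word G f w) = eval_word H (h \<circ> f) w"
proof -
  interpret h: group_hom G H h
    using assms(1,2) is_group by (simp add: group_hom_def group_hom_axioms_def)
  show ?thesis
    by (induction w) (auto simp: eval_word_closed f)
qed

end

lemma eval_word_letters:
  "eval_word (pres_group R) (\<lambda>x. pres_class (group_rels R) [(x, True)]) w = pres_class (group_rels R) w"
proof (induction w)
  case Nil
  then show ?case by (simp add: one_pres_group)
next
  case (Cons l w)
  then show ?case
    by (cases l) (simp add: inv_pres_group_letter mult_pres_group)
qed

definition respects_rels :: "('b, 'c) monoid_scheme \<Rightarrow> ('a \<Rightarrow> 'b) \<Rightarrow> ('a list \<times> 'a list) set \<Rightarrow> bool" where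
  "respects_rels H f R \<longleftrightarrow>
     (\<forall>x. f x \<in> carrier H) \<and> (\<forall>(u, v) \<in> R. eval_word H f (pos_word u) = eval_word H f (pos_word v))"

definition pres_group_lift ::
  "('b, 'c) monoid_scheme \<Rightarrow> ('a \<Rightarrow> 'b) \<Rightarrow> ('a \<times> bool) list set \<Rightarrow> 'b" where
  "pres_group_lift H f A = eval_word H f (SOME w. w \<in> A)"

lemma pres_group_lift_class:
  assumes "group H" and "respects_rels H f R"
  shows "pres_group_lift H f (pres_class (group_rels R) w) = eval_word H f w"
proof -
  have "w \<in> pres_class (group_rels R) w" by (simp add: pres_cong.refl)
  then have "(SOME w'. w' \<in> pres_class (group_rels R) w) \<in> pres_class (group_rels R) w"
    by (rule someI)
  then have uv: "(SOME w'. w' \<in> pres_class (group_rels R) w, w) \<in> pres_cong (group_rels R)"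
    by (simp add: pres_cong.sym)
  have f: "\<And>x. f x \<in> carrier H"
    and rel: "\<And>u v. (u, v) \<in> R \<Longrightarrow> eval_word H f (pos_word u) = eval_word H f (pos_word v)"
    using assms(2) by (auto simp: respects_rels_def)
  show ?thesis
    unfolding pres_group_lift_def by (rule group.eval_word_pres_cong[OF assms(1) f rel uv])
qed

lemma pres_group_lift_hom:
  assumes "group H" and "respects_rels H f R"
  shows "pres_group_lift H f \<in> hom (pres_group R) H"
proof -
  have f: "\<And>x. f x \<in> carrier H" using assms(2) by (simp add: respects_rels_def)
  show ?thesis
    by (rule homI)
       (auto simp: carrier_pres_group pres_group_lift_class[OF assms] mult_pres_group
          group.eval_word_closed[OF assms(1) f] group.eval_word_append[OF assms(1) f])
qed

lemma pres_group_lift_comp_id: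
  assumes f: "respects_rels (pres_group Q) f R" and g: "respects_rels (pres_group R) g Q"
    and gf: "\<And>x. pres_group_lift (pres_group R) g (f x) = pres_class (group_rels R) [(x, True)]"
    and A: "A \<in> carrier (pres_group R)"
  shows "pres_group_lift (pres_group R) g (pres_group_lift (pres_group Q) f A) = A"
proof -
  obtain w where w: "A = pres_class (group_rels R) w" using A by (auto simp: carrier_pres_group)
  have fc: "\<And>x. f x \<in> carrier (pres_group Q)" using f by (simp add: respects_rels_def)
  have "pres_group_lift (pres_group R) g (pres_group_lift (pres_group Q) f A)
          = pres_group_lift (pres_group R) g (eval_word (pres_group Q) f w)"
    by (simp add: w pres_group_lift_class[OF group_pres_group f])
  also have "\<dots> = eval_word (pres_group R) (pres_group_lift (pres_group R) g \<circ> f) w"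
    by (rule group.hom_eval_word[OF group_pres_group group_pres_group
          pres_group_lift_hom[OF group_pres_group g] fc])
  also have "pres_group_lift (pres_group R) g \<circ> f = (\<lambda>x. pres_class (group_rels R) [(x, True)])"
    using gf by (simp add: fun_eq_iff)
  finally show ?thesis by (simp only: eval_word_letters w)
qed

lemma pres_group_iso:
  assumes f: "respects_rels (pres_group Q) f R" and g: "respects_rels (pres_group R) g Q"
    and gf: "\<And>x. pres_group_lift (pres_group R) g (f x) = pres_class (group_rels R) [(x, True)]"
    and fg: "\<And>y. pres_group_lift (pres_group Q) f (g y) = pres_class (group_rels Q) [(y, True)]"
  shows "pres_group R \<cong> pres_group Q"
proof (rule is_isoI)
  let ?F = "pres_group_lift (pres_group Q) f" and ?G = "pres_group_lift (pres_group R) g"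
  have F: "?F \<in> hom (pres_group R) (pres_group Q)"
    by (rule pres_group_lift_hom[OF group_pres_group f])
  have G: "?G \<in> hom (pres_group Q) (pres_group R)"
    by (rule pres_group_lift_hom[OF group_pres_group g])
  have "bij_betw ?F (carrier (pres_group R)) (carrier (pres_group Q))"
  proof (rule bij_betw_byWitness[of _ ?G])
    show "\<forall>A\<in>carrier (pres_group R). ?G (?F A) = A"
      using pres_group_lift_comp_id[OF f g gf] by blast
    show "\<forall>B\<in>carrier (pres_group Q). ?F (?G B) = B"
      using pres_group_lift_comp_id[OF g f fg] by blast
    show "?F ` carrier (pres_group R) \<subseteq> carrier (pres_group Q)"
      using F by (rule hom_carrier)
    show "?G ` carrier (pres_group Q) \<subseteq> carrier (pres_group R)"
      using G by (rule hom_carrier)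
  qed
  with F show "?F \<in> iso (pres_group R) (pres_group Q)" by (simp add: iso_def)
qed

section \<open>Lcms in a cancellative monoid generated by two atoms\<close>

definition is_ldvd_lcm :: "('a, 'b) monoid_scheme \<Rightarrow> 'a \<Rightarrow> 'a \<Rightarrow> 'a \<Rightarrow> bool" where
  "is_ldvd_lcm M x y l \<longleftrightarrow> l \<in> carrier M \<and> ldvd M x l \<and> ldvd M y l \<and>
     (\<forall>c \<in> carrier M. ldvd M x c \<and> ldvd M y c \<longrightarrow> ldvd M l c)"

lemma is_ldvd_lcm_commute: "is_ldvd_lcm M x y l \<longleftrightarrow> is_ldvd_lcm M y x l"
  by (auto simp: is_ldvd_lcm_def)

context monoid
begin

lemma ldvd_refl: "x \<in> carrier G \<Longrightarrow> ldvd G x x"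
  by (auto simp: ldvd_def intro: bexI[of _ \<one>])

lemma ldvd_mult: "y \<in> carrier G \<Longrightarrow> ldvd G x (x \<otimes> y)"
  by (auto simp: ldvd_def)

lemma one_ldvd: "x \<in> carrier G \<Longrightarrow> ldvd G \<one> x"
  by (auto simp: ldvd_def)

lemma ldvd_carrier: "x \<in> carrier G \<Longrightarrow> ldvd G x y \<Longrightarrow> y \<in> carrier G"
  by (auto simp: ldvd_def)

lemma ldvd_trans: "x \<in> carrier G \<Longrightarrow> ldvd G x y \<Longrightarrow> ldvd G y z \<Longrightarrow> ldvd G x z"
  unfolding ldvd_def by (metis m_assoc m_closed)

lemma ldvd_mult_left: "g \<in> carrier G \<Longrightarrow> x \<in> carrier G \<Longrightarrow> ldvd G x y \<Longrightarrow> ldvd G (g \<otimes> x) (g \<otimes> y)"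
  unfolding ldvd_def by (metis m_assoc)

lemma is_ldvd_lcm_one: "y \<in> carrier G \<Longrightarrow> is_ldvd_lcm G \<one> y y"
  by (auto simp: is_ldvd_lcm_def ldvd_refl one_ldvd)

lemma is_ldvd_lcm_compose:
  assumes x: "x \<in> carrier G" and l1: "is_ldvd_lcm G x z l1" and l: "is_ldvd_lcm G l1 y l"
    and z: "\<And>c. c \<in> carrier G \<Longrightarrow> ldvd G x c \<Longrightarrow> ldvd G y c \<Longrightarrow> ldvd G z c"
  shows "is_ldvd_lcm G x y l"
  using assms ldvd_trans unfolding is_ldvd_lcm_def by blast

end

locale graded_left_cancel_monoid = monoid +
  fixes len :: "'a \<Rightarrow> nat"
  assumes cancel_left: "\<lbrakk>x \<in> carrier G; y \<in> carrier G; z \<in> carrier G; x \<otimes> y = x \<otimes> z\<rbrakk> \<Longrightarrow> y = z"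
    and len_mult: "\<lbrakk>x \<in> carrier G; y \<in> carrier G\<rbrakk> \<Longrightarrow> len (x \<otimes> y) = len x + len y"
    and len_eq_0: "\<lbrakk>x \<in> carrier G; len x = 0\<rbrakk> \<Longrightarrow> x = \<one>"
begin

lemma ldvd_cancel_left:
  assumes g: "g \<in> carrier G" and x: "x \<in> carrier G" and y: "y \<in> carrier G"
    and "ldvd G (g \<otimes> x) (g \<otimes> y)"
  shows "ldvd G x y"
proof -
  obtain z where z: "z \<in> carrier G" "g \<otimes> y = g \<otimes> x \<otimes> z" using assms(4) by (auto simp: ldvd_def)
  then have "g \<otimes> y = g \<otimes> (x \<otimes> z)" using g x by (simp add: m_assoc)
  then have "y = x \<otimes> z" by (rule cancel_left[OF g y m_closed[OF x z(1)]])
  then show ?thesis using z(1) by (auto simp: ldvd_def)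
qed

lemma ldvd_len: "x \<in> carrier G \<Longrightarrow> ldvd G x y \<Longrightarrow> len x \<le> len y"
  unfolding ldvd_def by (auto simp: len_mult)

lemma is_ldvd_lcm_mult_left:
  assumes g: "g \<in> carrier G" and x: "x \<in> carrier G" and y: "y \<in> carrier G"
    and l: "is_ldvd_lcm G x y l"
  shows "is_ldvd_lcm G (g \<otimes> x) (g \<otimes> y) (g \<otimes> l)"
  unfolding is_ldvd_lcm_def
proof (intro conjI ballI impI)
  show "g \<otimes> l \<in> carrier G" "ldvd G (g \<otimes> x) (g \<otimes> l)" "ldvd G (g \<otimes> y) (g \<otimes> l)"
    using l g x y by (auto simp: is_ldvd_lcm_def intro: ldvd_mult_left)
next
  fix c assume c: "c \<in> carrier G" and "ldvd G (g \<otimes> x) c \<and> ldvd G (g \<otimes> y) c"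
  then obtain c' where c': "c' \<in> carrier G" "c = g \<otimes> c'" "ldvd G x c'"
    using g x by (auto simp: ldvd_def m_assoc)
  with \<open>ldvd G (g \<otimes> x) c \<and> ldvd G (g \<otimes> y) c\<close> have "ldvd G y c'"
    using ldvd_cancel_left[OF g y c'(1)] by simp
  with c' l have "ldvd G l c'" by (auto simp: is_ldvd_lcm_def)
  with c' g l show "ldvd G (g \<otimes> l) c" by (auto simp: is_ldvd_lcm_def intro: ldvd_mult_left)
qed

text \<open>A greatest common divisor is a common divisor of maximal length: the lcm of
  it and any other common divisor is again a common divisor, hence cannot be longer.\<close>

lemma has_lcms_gcds_if_lcms:
  assumes lcm: "\<And>x y. x \<in> carrier G \<Longrightarrow> y \<in> carrier G \<Longrightarrow> \<exists>l. is_ldvd_lcm G x y l"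
  shows "has_lcms_gcds (carrier G) (ldvd G)"
  unfolding has_lcms_gcds_def
proof (intro ballI conjI)
  fix x y assume xy: "x \<in> carrier G" "y \<in> carrier G"
  show "\<exists>c\<in>carrier G. ldvd G x c \<and> ldvd G y c \<and> (\<forall>d\<in>carrier G. ldvd G x d \<and> ldvd G y d \<longrightarrow> ldvd G c d)"
    using lcm[OF xy] unfolding is_ldvd_lcm_def by blast
  let ?P = "\<lambda>n. \<exists>d\<in>carrier G. ldvd G d x \<and> ldvd G d y \<and> len d = n"
  have P0: "?P (len \<one>)" using one_closed one_ldvd[OF xy(1)] one_ldvd[OF xy(2)] by blast
  have bound: "\<forall>n. ?P n \<longrightarrow> n \<le> len x" using ldvd_len by blast
  obtain n where n: "?P n" "\<forall>n'. ?P n' \<longrightarrow> n' \<le> n"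
    using Nat.ex_has_greatest_nat[OF P0 bound] by blast
  then obtain d where d: "d \<in> carrier G" "ldvd G d x" "ldvd G d y" "len d = n" by blast
  have "ldvd G d' d" if d': "d' \<in> carrier G" "ldvd G d' x" "ldvd G d' y" for d'
  proof -
    obtain l where l: "is_ldvd_lcm G d d' l" using lcm[OF d(1) d'(1)] by blast
    then have "ldvd G l x" "ldvd G l y" using d d' xy unfolding is_ldvd_lcm_def by blast+
    then have "len l \<le> n" using n(2) l unfolding is_ldvd_lcm_def by blast
    moreover obtain t where t: "t \<in> carrier G" "l = d \<otimes> t"
      using l unfolding is_ldvd_lcm_def ldvd_def by blast
    ultimately have "len t = 0" using len_mult[OF d(1) t(1)] d(4) by simp
    then have "t = \<one>" using len_eq_0 t(1) by blast
    then have "l = d" using t d(1) by simp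
    then show ?thesis using l unfolding is_ldvd_lcm_def by blast
  qed
  then show "\<exists>c\<in>carrier G. ldvd G c x \<and> ldvd G c y \<and> (\<forall>d\<in>carrier G. ldvd G d x \<and> ldvd G d y \<longrightarrow> ldvd G d c)"
    using d by blast
qed

abbreviation lcms_below :: "'a \<Rightarrow> bool" where
  "lcms_below w \<equiv> \<forall>x \<in> carrier G. \<forall>y \<in> carrier G.
     ldvd G x w \<longrightarrow> ldvd G y w \<longrightarrow> (\<exists>l. is_ldvd_lcm G x y l)"

lemma lcm_same_atom:
  assumes g: "g \<in> carrier G" "g \<noteq> \<one>" and w: "w \<in> carrier G"
    and IH: "\<And>w'. w' \<in> carrier G \<Longrightarrow> len w' < len w \<Longrightarrow> lcms_below w'"
    and x: "x \<in> carrier G" "ldvd G (g \<otimes> x) w" and y: "y \<in> carrier G" "ldvd G (g \<otimes> y) w"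
  shows "\<exists>l. is_ldvd_lcm G (g \<otimes> x) (g \<otimes> y) l"
proof -
  obtain t where t: "t \<in> carrier G" "w = g \<otimes> (x \<otimes> t)"
    using x g by (auto simp: ldvd_def m_assoc)
  have xt: "x \<otimes> t \<in> carrier G" using x(1) t(1) by simp
  have "len g \<noteq> 0" using g len_eq_0 by blast
  then have "len (x \<otimes> t) < len w" using t len_mult[OF g(1) xt] by simp
  moreover have "ldvd G y (x \<otimes> t)"
    using ldvd_cancel_left[OF g(1) y(1) xt] y(2) t(2) by simp
  ultimately obtain l where "is_ldvd_lcm G x y l"
    using IH[OF xt] x(1) y(1) ldvd_mult[OF t(1), of x] by blast
  then show ?thesis using is_ldvd_lcm_mult_left[OF g(1) x(1) y(1)] by blast
qed

text \<open>If the first atoms g and h differ, every common multiple of g x and h y is a multiple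
  of the lcm L = g u of g and h; then lcm(g x, h y) = lcm(lcm(g x, L), h y), and both of these
  lcms start with a common atom.\<close>

lemma lcm_different_atoms:
  assumes g: "g \<in> carrier G" "g \<noteq> \<one>" and h: "h \<in> carrier G" "h \<noteq> \<one>"
    and L: "is_ldvd_lcm G g h L" and w: "w \<in> carrier G"
    and IH: "\<And>w'. w' \<in> carrier G \<Longrightarrow> len w' < len w \<Longrightarrow> lcms_below w'"
    and x: "x \<in> carrier G" "ldvd G (g \<otimes> x) w" and y: "y \<in> carrier G" "ldvd G (h \<otimes> y) w"
  shows "\<exists>l. is_ldvd_lcm G (g \<otimes> x) (h \<otimes> y) l"
proof -
  have gx: "g \<otimes> x \<in> carrier G" and hy: "h \<otimes> y \<in> carrier G" using g h x y by simp_all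
  have L_dvd: "ldvd G L c" if c: "c \<in> carrier G" "ldvd G (g \<otimes> x) c" "ldvd G (h \<otimes> y) c" for c
  proof -
    have "ldvd G g c" using ldvd_trans[OF g(1) ldvd_mult[OF x(1)] c(2)] .
    moreover have "ldvd G h c" using ldvd_trans[OF h(1) ldvd_mult[OF y(1)] c(3)] .
    ultimately show ?thesis using L c(1) by (simp add: is_ldvd_lcm_def)
  qed
  obtain u where u: "u \<in> carrier G" "L = g \<otimes> u" using L by (auto simp: is_ldvd_lcm_def ldvd_def)
  obtain t where t: "t \<in> carrier G" "w = L \<otimes> t" using L_dvd[OF w x(2) y(2)] by (auto simp: ldvd_def)
  have ut: "u \<otimes> t \<in> carrier G" "w = g \<otimes> (u \<otimes> t)" using u t g(1) by (simp_all add: m_assoc)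
  have "len g \<noteq> 0" using g len_eq_0 by blast
  then have "len (u \<otimes> t) < len w" using ut len_mult[OF g(1) ut(1)] by simp
  moreover have "ldvd G x (u \<otimes> t)" using ldvd_cancel_left[OF g(1) x(1) ut(1)] x(2) ut(2) by simp
  ultimately obtain l1 where "is_ldvd_lcm G x u l1"
    using IH[OF ut(1)] x(1) u(1) ldvd_mult[OF t(1), of u] by blast
  then have gl1: "is_ldvd_lcm G (g \<otimes> x) L (g \<otimes> l1)"
    using is_ldvd_lcm_mult_left[OF g(1) x(1) u(1)] u(2) by simp
  then have "ldvd G h (g \<otimes> l1)" using ldvd_trans[OF h(1)] L unfolding is_ldvd_lcm_def by blast
  then obtain v where v: "v \<in> carrier G" "g \<otimes> l1 = h \<otimes> v" by (auto simp: ldvd_def)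
  obtain w' where w': "w' \<in> carrier G" "w = h \<otimes> w'" using y(2) h(1) y(1) by (auto simp: ldvd_def m_assoc)
  have "len h \<noteq> 0" using h len_eq_0 by blast
  then have "len w' < len w" using w' len_mult[OF h(1) w'(1)] by simp
  moreover have "ldvd G (h \<otimes> v) w"
    using gl1 w x(2) L_dvd[OF w x(2) y(2)] v(2) by (simp add: is_ldvd_lcm_def)
  then have "ldvd G v w'" using ldvd_cancel_left[OF h(1) v(1) w'(1)] w'(2) by simp
  moreover have "ldvd G y w'" using ldvd_cancel_left[OF h(1) y(1) w'(1)] y(2) w'(2) by simp
  ultimately obtain l3 where "is_ldvd_lcm G v y l3" using IH[OF w'(1)] v(1) y(1) by blast
  then have "is_ldvd_lcm G (g \<otimes> l1) (h \<otimes> y) (h \<otimes> l3)"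
    using is_ldvd_lcm_mult_left[OF h(1) v(1) y(1)] v(2) by simp
  then show ?thesis using is_ldvd_lcm_compose[OF gx gl1 _ L_dvd] by blast
qed

end

locale two_atom_monoid = graded_left_cancel_monoid +
  fixes a b :: 'a
  assumes atoms_carrier: "a \<in> carrier G" "b \<in> carrier G"
    and atoms_non_one: "a \<noteq> \<one>" "b \<noteq> \<one>"
    and atoms_generate: "\<lbrakk>x \<in> carrier G; x \<noteq> \<one>\<rbrakk> \<Longrightarrow> \<exists>y \<in> carrier G. x = a \<otimes> y \<or> x = b \<otimes> y"
    and atoms_lcm: "\<exists>l. is_ldvd_lcm G a b l"
    and common_multiple: "\<lbrakk>x \<in> carrier G; y \<in> carrier G\<rbrakk> \<Longrightarrow> \<exists>c. ldvd G x c \<and> ldvd G y c"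
begin

lemma ex_lcm_of_divisors:
  "w \<in> carrier G \<Longrightarrow> lcms_below w"
proof (induction "len w" arbitrary: w rule: less_induct)
  case less
  show ?case
  proof (intro ballI impI)
    fix x y assume xy: "x \<in> carrier G" "y \<in> carrier G" "ldvd G x w" "ldvd G y w"
    show "\<exists>l. is_ldvd_lcm G x y l"
    proof (cases "x = \<one> \<or> y = \<one>")
      case True
      then show ?thesis
        using is_ldvd_lcm_one[OF xy(1)] is_ldvd_lcm_one[OF xy(2)] is_ldvd_lcm_commute[of G x \<one>]
        by auto
    next
      case False
      then obtain g x' where g: "g \<in> {a, b}" "x' \<in> carrier G" "x = g \<otimes> x'"
        using atoms_generate[OF xy(1)] by blast
      obtain h y' where h: "h \<in> {a, b}" "y' \<in> carrier G" "y = h \<otimes> y'"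
        using atoms_generate[OF xy(2)] False by blast
      have ghc: "g \<in> carrier G" "g \<noteq> \<one>" "h \<in> carrier G" "h \<noteq> \<one>"
        using g(1) h(1) atoms_carrier atoms_non_one by auto
      show ?thesis
      proof (cases "g = h")
        case True
        then show ?thesis
          using lcm_same_atom[OF ghc(1,2) less.prems less.hyps g(2) _ h(2)] g(3) h(3) xy(3,4) by simp
      next
        case False
        obtain L where L: "is_ldvd_lcm G a b L" using atoms_lcm by blast
        then have "is_ldvd_lcm G g h L"
          using g(1) h(1) False is_ldvd_lcm_commute[of G a b L] by auto
        then show ?thesis
          using lcm_different_atoms[OF ghc _ less.prems less.hyps g(2) _ h(2)] g(3) h(3) xy(3,4) by simp
      qed
    qed
  qed
qed

theorem has_lcms_gcds: "has_lcms_gcds (carrier G) (ldvd G)"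
proof (rule has_lcms_gcds_if_lcms)
  fix x y assume "x \<in> carrier G" "y \<in> carrier G"
  then show "\<exists>l. is_ldvd_lcm G x y l"
    using common_multiple ex_lcm_of_divisors ldvd_carrier by blast
qed

end

lemma has_lcms_gcds_transfer:
  assumes P: "has_lcms_gcds S P" and bij: "bij_betw f T S"
    and Q: "\<And>x y. x \<in> T \<Longrightarrow> y \<in> T \<Longrightarrow> Q x y \<longleftrightarrow> P (f x) (f y)"
  shows "has_lcms_gcds T Q"
proof -
  have image: "f x \<in> S" if "x \<in> T" for x using bij that by (auto simp: bij_betw_def)
  have preimage: "\<exists>x \<in> T. z = f x" if "z \<in> S" for z using bij that by (auto simp: bij_betw_def)
  have "\<exists>c\<in>T. Q a c \<and> Q b c \<and> (\<forall>d\<in>T. Q a d \<and> Q b d \<longrightarrow> Q c d)"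
    and "\<exists>c\<in>T. Q c a \<and> Q c b \<and> (\<forall>d\<in>T. Q d a \<and> Q d b \<longrightarrow> Q d c)"
    if ab: "a \<in> T" "b \<in> T" for a b
  proof -
    obtain l where l: "l \<in> S" "P (f a) l" "P (f b) l" "\<forall>d\<in>S. P (f a) d \<and> P (f b) d \<longrightarrow> P l d"
      using P image[OF ab(1)] image[OF ab(2)] unfolding has_lcms_gcds_def by blast
    obtain l' where l': "l' \<in> T" "l = f l'" using preimage[OF l(1)] by blast
    show "\<exists>c\<in>T. Q a c \<and> Q b c \<and> (\<forall>d\<in>T. Q a d \<and> Q b d \<longrightarrow> Q c d)"
      using l l' ab image by (intro bexI[OF _ l'(1)]) (simp add: Q)
    obtain g where g: "g \<in> S" "P g (f a)" "P g (f b)" "\<forall>d\<in>S. P d (f a) \<and> P d (f b) \<longrightarrow> P d g"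
      using P image[OF ab(1)] image[OF ab(2)] unfolding has_lcms_gcds_def by blast
    obtain g' where g': "g' \<in> T" "g = f g'" using preimage[OF g(1)] by blast
    show "\<exists>c\<in>T. Q c a \<and> Q c b \<and> (\<forall>d\<in>T. Q d a \<and> Q d b \<longrightarrow> Q d c)"
      using g g' ab image by (intro bexI[OF _ g'(1)]) (simp add: Q)
  qed
  then show ?thesis unfolding has_lcms_gcds_def by blast
qed

section \<open>Normal forms in M(m)\<close>

locale odd_dihedral =
  fixes m k :: nat
  assumes m_eq: "m = 2 * k + 1"
begin

abbreviation M_cong where "M_cong \<equiv> pres_cong (rel_M m)"

lemma rel_M_eq: "rel_M m = {(R1 # replicate k R2 @ [R1], replicate (Suc k) R2)}"
  using m_eq by (simp add: rel_M_def)

lemma defining_relation: "(R1 # replicate k R2 @ [R1], replicate (Suc k) R2) \<in> M_cong"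
  by (rule pres_cong.base) (simp add: rel_M_eq)

lemma m_pos: "m > 0" using m_eq by simp

lemma int_m: "int m = 2 * int k + 1" using m_eq by simp

lemma add_Suc_k_mod_m_eq_0_iff:
  assumes "r < m"
  shows "(int r + (int k + 1)) mod int m = 0 \<longleftrightarrow> r = k"
proof -
  consider "r < k" | "r = k" | "k < r" by linarith
  then show ?thesis
  proof cases
    case 1
    then have "(int r + (int k + 1)) mod int m = int r + (int k + 1)"
      using int_m by (intro mod_pos_pos_trivial) auto
    then show ?thesis using 1 by simp
  next
    case 2
    then show ?thesis using int_m by simp
  next
    case 3
    have "(int r + (int k + 1)) mod int m = (int r - int k + int m) mod int m"
      using int_m by (simp add: algebra_simps)
    also have "\<dots> = int r - int k"
      using 3 assms by (simp add: mod_pos_pos_trivial)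
    finally show ?thesis using 3 by simp
  qed
qed

lemma diff_Suc_k_mod_m_eq_k_iff:
  assumes "r < m"
  shows "(int r + - (int k + 1)) mod int m = int k \<longleftrightarrow> r = 0"
proof (cases "k < r")
  case True
  then have "(int r + - (int k + 1)) mod int m = int r + - (int k + 1)"
    using assms by (intro mod_pos_pos_trivial) auto
  then show ?thesis using True assms int_m by auto
next
  case False
  have "int r + - (int k + 1) = (int r + int k) + (- 1) * int m" using int_m by simp
  then have "(int r + - (int k + 1)) mod int m = (int r + int k) mod int m" by (metis mod_mult_self1)
  also have "\<dots> = int r + int k"
    using False int_m by (intro mod_pos_pos_trivial) auto
  finally show ?thesis by simp
qed

text \<open>The state (n, [rj, \<dots>, r1]) stands for the word \<rho>2^n (\<rho>1 \<rho>2^r1) \<dots> (\<rho>1 \<rho>2^rj); the list is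
  kept last block first. The exponent n is an integer so that inverse generators can act too;
  state_word is only meaningful for n \<ge> 0, as nat truncates.\<close>

definition block :: "nat \<Rightarrow> gen2 list" where "block r = R1 # replicate r R2"

definition state_word :: "int \<times> nat list \<Rightarrow> gen2 list" where
  "state_word p = replicate (nat (fst p)) R2 @ concat (map block (rev (snd p)))"

text \<open>Appending \<rho>2^j to the last block, complete factors \<Delta> = \<rho>2^m move to the front, \<Delta> being
  central.\<close>

definition shift :: "int \<Rightarrow> int \<times> nat list \<Rightarrow> int \<times> nat list" where
  "shift j p = (case p of (n, []) \<Rightarrow> (n + j, [])
      | (n, r # rs) \<Rightarrow> (n + int m * ((int r + j) div int m), nat ((int r + j) mod int m) # rs))"

lemma shift_Nil[simp]: "shift j (n, []) = (n + j, [])" by (simp add: shift_def)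
lemma shift_Cons: "shift j (n, r # rs) = (n + int m * ((int r + j) div int m), nat ((int r + j) mod int m) # rs)"
  by (simp add: shift_def)

definition head_bounded :: "int \<times> nat list \<Rightarrow> bool" where
  "head_bounded p = (case snd p of [] \<Rightarrow> True | r # _ \<Rightarrow> r < m)"

lemma shift_add: "shift i (shift j p) = shift (i + j) p"
proof -
  obtain n rs where p: "p = (n, rs)" by (cases p)
  show ?thesis
  proof (cases rs)
    case Nil then show ?thesis using p by (simp add: algebra_simps)
  next
    case (Cons r rs')
    have mp: "int m > 0" using m_pos by simp
    let ?t = "int r + j"
    have nn: "?t mod int m \<ge> 0" using mp by simp
    have e1: "int (nat (?t mod int m)) = ?t mod int m" using nn by simp
    have e2: "(?t + i) div int m = ?t div int m + (?t mod int m + i) div int m"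
    proof -
      have "?t + i = (?t mod int m + i) + (?t div int m) * int m" by simp
      then have "(?t + i) div int m = ((?t mod int m + i) + (?t div int m) * int m) div int m" by simp
      also have "\<dots> = ?t div int m + (?t mod int m + i) div int m"
        by (rule div_mult_self1) (use mp in simp)
      finally show ?thesis .
    qed
    have e3: "(?t mod int m + i) mod int m = (?t + i) mod int m" by (simp add: mod_add_left_eq)
    show ?thesis using p Cons e1 e2 e3
      by (simp add: shift_Cons algebra_simps)
  qed
qed

lemma shift_0: "head_bounded p \<Longrightarrow> shift 0 p = p"
proof -
  assume h: "head_bounded p"
  obtain n rs where p: "p = (n, rs)" by (cases p)
  show ?thesis
  proof (cases rs)
    case Nil then show ?thesis using p by simp
  next
    case (Cons r rs')
    then have "r < m" using h p by (simp add: head_bounded_def)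
    then show ?thesis using p Cons by (simp add: shift_Cons)
  qed
qed

lemma shift_m: "head_bounded p \<Longrightarrow> shift (int m) p = (fst p + int m, snd p)"
  using m_pos by (cases p; cases "snd p")
    (auto simp: head_bounded_def shift_Cons div_add_self2 mod_add_self2 div_pos_pos_trivial mod_pos_pos_trivial)

lemma head_bounded_shift: "head_bounded (shift j p)"
  using m_pos by (cases p; cases "snd p") (auto simp: head_bounded_def shift_Cons nat_less_iff)

definition normal :: "int \<times> nat list \<Rightarrow> bool" where
  "normal p = (case snd p of [] \<Rightarrow> True | r # rest \<Rightarrow> r < m \<and> (\<forall>x\<in>set rest. x < m \<and> x \<noteq> k))"

lemma normal_head_bounded: "normal p \<Longrightarrow> head_bounded p"
  by (auto simp: normal_def head_bounded_def split: list.splits)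

lemma normal_shift: "normal p \<Longrightarrow> normal (shift j p)"
  using m_pos by (cases p; cases "snd p") (auto simp: normal_def shift_Cons nat_less_iff)

lemma shift_inverse_left: "head_bounded p \<Longrightarrow> shift j (shift (-j) p) = p"
  by (simp add: shift_add shift_0)
lemma shift_inverse_right: "head_bounded p \<Longrightarrow> shift (-j) (shift j p) = p"
  by (simp add: shift_add shift_0)

text \<open>Appending \<rho>1 to a last block \<rho>1 \<rho>2^k applies the relation \<rho>1 \<rho>2^k \<rho>1 = \<rho>2^(k+1).\<close>

fun step :: "gen2 \<Rightarrow> int \<times> nat list \<Rightarrow> int \<times> nat list" where
  "step R2 p = shift 1 p"
| "step R1 (n, []) = (n, [0])"
| "step R1 (n, r # rs) = (if r = k then shift (int k + 1) (n, rs) else (n, 0 # r # rs))"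

fun step_inv :: "gen2 \<Rightarrow> int \<times> nat list \<Rightarrow> int \<times> nat list" where
  "step_inv R2 p = shift (-1) p"
| "step_inv R1 (n, rs) = (if rs \<noteq> [] \<and> hd rs = 0 then (n, tl rs)
      else (case shift (- (int k + 1)) (n, rs) of (n', rs') \<Rightarrow> (n', k # rs')))"

lemma normal_step: "normal p \<Longrightarrow> normal (step s p)"
proof (cases s)
  case R1
  assume v: "normal p"
  obtain n rs where p: "p = (n, rs)" by (cases p)
  show ?thesis
  proof (cases rs)
    case Nil then show ?thesis using p R1 m_pos by (simp add: normal_def)
  next
    case (Cons r rs')
    have "normal (n, rs')" using v p Cons by (auto simp: normal_def split: list.splits)
    then show ?thesis using p Cons R1 v normal_shift m_pos by (auto simp: normal_def)
  qed
qed (auto simp: normal_shift)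

lemma normal_step_inv: "normal p \<Longrightarrow> normal (step_inv s p)"
proof (cases s)
  case R1
  assume v: "normal p"
  obtain n rs where p: "p = (n, rs)" by (cases p)
  show ?thesis
  proof (cases "rs \<noteq> [] \<and> hd rs = 0")
    case True
    then show ?thesis using p R1 v by (auto simp: normal_def neq_Nil_conv split: list.splits)
  next
    case False
    obtain n' rs' where b: "shift (- (int k + 1)) (n, rs) = (n', rs')" by fastforce
    have "\<forall>x\<in>set rs'. x < m \<and> x \<noteq> k"
    proof (cases rs)
      case Nil
      then show ?thesis using b by simp
    next
      case (Cons r rr)
      then have "r \<noteq> 0" "r < m" "\<forall>x\<in>set rr. x < m \<and> x \<noteq> k"
        using False v p by (auto simp: normal_def)
      moreover have "nat ((int r + - (int k + 1)) mod int m) \<noteq> k"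
        using diff_Suc_k_mod_m_eq_k_iff[of r] \<open>r \<noteq> 0\<close> \<open>r < m\<close> m_pos by (simp add: nat_eq_iff)
      ultimately show ?thesis
        using b Cons m_pos by (auto simp: shift_Cons nat_less_iff)
    qed
    moreover have "step_inv s p = (n', k # rs')" using False p R1 b by auto
    moreover have "k < m" using m_eq by simp
    ultimately show ?thesis by (simp add: normal_def)
  qed
qed (auto simp: normal_shift)

lemma step_step_inv: "normal p \<Longrightarrow> step s (step_inv s p) = p"
proof (cases s)
  case R2
  assume v: "normal p"
  then show ?thesis using R2 shift_inverse_left[OF normal_head_bounded[OF v], of 1] by simp
next
  case R1
  assume v: "normal p"
  obtain n rs where p: "p = (n, rs)" by (cases p)
  show ?thesis
  proof (cases "rs \<noteq> [] \<and> hd rs = 0")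
    case True
    then obtain rr where rs: "rs = 0 # rr" by (cases rs) auto
    show ?thesis
    proof (cases rr)
      case Nil then show ?thesis using p R1 rs by simp
    next
      case (Cons s rr')
      then have "s \<noteq> k" using v p rs by (auto simp: normal_def)
      then show ?thesis using p R1 rs Cons by simp
    qed
  next
    case False
    obtain n' rs' where b: "shift (- (int k + 1)) (n, rs) = (n', rs')" by (cases "shift (- (int k + 1)) (n, rs)")
    have "step_inv s p = (n', k # rs')" using False p R1 b by auto
    moreover have "shift (int k + 1) (n', rs') = p"
      using shift_inverse_left[OF normal_head_bounded[OF v], of "int k + 1"] b p by simp
    ultimately show ?thesis using R1 by simp
  qed
qed

lemma step_inv_step: "normal p \<Longrightarrow> step_inv s (step s p) = p"
proof (cases s)
  case R2
  assume v: "normal p"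
  then show ?thesis using R2 shift_inverse_right[OF normal_head_bounded[OF v], of 1] by simp
next
  case R1
  assume v: "normal p"
  obtain n rs where p: "p = (n, rs)" by (cases p)
  show ?thesis
  proof (cases rs)
    case Nil then show ?thesis using p R1 by simp
  next
    case (Cons r rr)
    show ?thesis
    proof (cases "r = k")
      case False then show ?thesis using p R1 Cons by simp
    next
      case True
      have vr: "normal (n, rr)" using v p Cons by (auto simp: normal_def split: list.splits)
      obtain n' rs' where b: "shift (int k + 1) (n, rr) = (n', rs')" by (cases "shift (int k + 1) (n, rr)")
      have a: "step s p = (n', rs')" using p R1 Cons True b by simp
      have nz: "\<not> (rs' \<noteq> [] \<and> hd rs' = 0)"
      proof (cases rr)
        case Nil
        then show ?thesis using b by simp
      next
        case (Cons s rr')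
        then have "s < m" "s \<noteq> k" using v p \<open>rs = r # rr\<close> by (auto simp: normal_def)
        then show ?thesis
          using b Cons add_Suc_k_mod_m_eq_0_iff[of s] m_pos by (auto simp: shift_Cons nat_eq_iff)
      qed
      have "step_inv s (step s p) = step_inv R1 (n', rs')" using a R1 by simp
      also have "\<dots> = (case shift (- (int k + 1)) (n', rs') of (n'', rs'') \<Rightarrow> (n'', k # rs''))"
        by (simp only: step_inv.simps if_not_P[OF nz])
      also have "shift (- (int k + 1)) (n', rs') = (n, rr)"
        using shift_inverse_right[OF normal_head_bounded[OF vr], of "int k + 1"] b by simp
      finally show ?thesis using p Cons True by simp
    qed
  qed
qed

definition run :: "gen2 list \<Rightarrow> int \<times> nat list \<Rightarrow> int \<times> nat list" where
  "run w p = fold step w p"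

lemma run_Nil[simp]: "run [] p = p" by (simp add: run_def)
lemma run_Cons[simp]: "run (s # w) p = run w (step s p)" by (simp add: run_def)
lemma run_append[simp]: "run (u @ v) p = run v (run u p)" by (simp add: run_def)

lemma normal_run: "normal p \<Longrightarrow> normal (run w p)"
  by (induction w arbitrary: p) (auto simp: normal_step)

lemma run_replicate_R2: "head_bounded p \<Longrightarrow> run (replicate j R2) p = shift (int j) p"
proof (induction j arbitrary: p)
  case 0 then show ?case by (simp add: shift_0)
next
  case (Suc j)
  have "run (replicate (Suc j) R2) p = run (replicate j R2) (shift 1 p)" by simp
  also have "\<dots> = shift (int j) (shift 1 p)" using Suc.IH[OF head_bounded_shift] .
  also have "\<dots> = shift (int j + 1) p" by (rule shift_add)
  also have "\<dots> = shift (int (Suc j)) p" by (simp add: add.commute)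
  finally show ?case .
qed

lemma run_relation: "normal p \<Longrightarrow> run (R1 # replicate k R2 @ [R1]) p = run (replicate (Suc k) R2) p"
proof -
  assume v: "normal p"
  obtain n rs where p: "p = (n, rs)" by (cases p)
  have km: "k < m" using m_eq by simp
  have rhs: "run (replicate (Suc k) R2) p = shift (int k + 1) p"
    using run_replicate_R2[OF normal_head_bounded[OF v], of "Suc k"] by (simp add: add.commute)
  have "head_bounded (step R1 p)" using normal_step[OF v] normal_head_bounded by blast
  then have lhs: "run (R1 # replicate k R2 @ [R1]) p = step R1 (shift (int k) (step R1 p))"
    using run_replicate_R2[of "step R1 p" k] by simp
  show ?thesis
  proof (cases rs)
    case Nil
    have "shift (int k) (n, [0]) = (n, [k])" using km by (simp add: shift_Cons)
    then show ?thesis using lhs rhs p Nil by simp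
  next
    case (Cons r rr)
    show ?thesis
    proof (cases "r = k")
      case False
      have "shift (int k) (n, 0 # r # rr) = (n, k # r # rr)" using km by (simp add: shift_Cons)
      then show ?thesis using lhs rhs p Cons False by simp
    next
      case True
      show ?thesis
      proof (cases rr)
        case Nil
        have "shift (int k + 1) (n, [k]) = (n + int k + 1 + int k, [0])"
          by (simp add: shift_Cons int_m)
        then show ?thesis using lhs rhs p Cons True Nil by (simp add: algebra_simps)
      next
        case (Cons s rr')
        have s: "s < m" "s \<noteq> k" using v p \<open>rs = r # rr\<close> Cons by (auto simp: normal_def)
        have h: "head_bounded (n, s # rr')" using s by (simp add: head_bounded_def)
        have "shift (int k) (shift (int k + 1) (n, s # rr')) = shift (int m) (n, s # rr')"
          using shift_add by (simp add: int_m algebra_simps)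
        also have "\<dots> = (n + int m, s # rr')" using shift_m[OF h] by simp
        finally have e1: "shift (int k) (shift (int k + 1) (n, s # rr')) = (n + int m, s # rr')" .
        have e2: "shift (int k + 1) (n, k # s # rr') = (n + int m, 0 # s # rr')"
          by (simp add: shift_Cons int_m)
        show ?thesis using lhs rhs p \<open>rs = r # rr\<close> True Cons e1 e2 s by simp
      qed
    qed
  qed
qed

lemma run_pres_cong: "(u, v) \<in> M_cong \<Longrightarrow> normal p \<Longrightarrow> run u p = run v p"
proof (induction arbitrary: p rule: pres_cong.induct)
  case (base u v)
  then show ?case using run_relation by (simp add: rel_M_eq)
next
  case (ctx u v x y)
  then show ?case using normal_run by simp
qed auto

definition step_letter :: "gen2 \<times> bool \<Rightarrow> int \<times> nat list \<Rightarrow> int \<times> nat list" where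
  "step_letter l = (if snd l then step (fst l) else step_inv (fst l))"

definition run_letters :: "(gen2 \<times> bool) list \<Rightarrow> int \<times> nat list \<Rightarrow> int \<times> nat list" where
  "run_letters w p = fold step_letter w p"

lemma run_letters_Cons[simp]: "run_letters (l # w) p = run_letters w (step_letter l p)" by (simp add: run_letters_def)
lemma run_letters_Nil[simp]: "run_letters [] p = p" by (simp add: run_letters_def)
lemma run_letters_append[simp]: "run_letters (u @ v) p = run_letters v (run_letters u p)" by (simp add: run_letters_def)

lemma normal_step_letter: "normal p \<Longrightarrow> normal (step_letter l p)"
  by (simp add: step_letter_def normal_step normal_step_inv)

lemma normal_run_letters: "normal p \<Longrightarrow> normal (run_letters w p)"
  by (induction w arbitrary: p) (auto simp: normal_step_letter)

lemma run_letters_pos_word: "run_letters (pos_word w) p = run w p"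
  by (induction w arbitrary: p) (auto simp: step_letter_def)

lemma run_letters_pres_cong: "(u, v) \<in> pres_cong (group_rels (rel_M m)) \<Longrightarrow> normal p \<Longrightarrow> run_letters u p = run_letters v p"
proof (induction arbitrary: p rule: pres_cong.induct)
  case (base u v)
  then consider (r) u' v' where "u = pos_word u'" "v = pos_word v'" "(u', v') \<in> rel_M m"
    | (c) a e where "u = [(a, e), (a, \<not> e)]" "v = []"
    by (auto simp: group_rels_def)
  then show ?case
  proof cases
    case r
    then show ?thesis using run_pres_cong[OF pres_cong.base[OF r(3)] base(2)] by (simp add: run_letters_pos_word)
  next
    case c
    then show ?thesis using base(2) by (cases e) (auto simp: step_letter_def step_step_inv step_inv_step)
  qed
next
  case (ctx u v x y)
  then show ?case using normal_run_letters by simp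
qed auto

abbreviation Delta_word where "Delta_word \<equiv> replicate m R2"

lemma Delta_split_left: "replicate m R2 = replicate k R2 @ replicate (Suc k) R2"
proof -
  have "m = k + Suc k" using m_eq by simp
  then show ?thesis by (simp only: replicate_add)
qed

lemma Delta_split_right: "replicate m R2 = replicate (Suc k) R2 @ replicate k R2"
proof -
  have "m = Suc k + k" using m_eq by simp
  then show ?thesis by (simp only: replicate_add)
qed

lemma R1_Delta_commute: "([R1] @ Delta_word, Delta_word @ [R1]) \<in> M_cong"
proof -
  have 1: "([R1] @ Delta_word, (R1 # replicate k R2) @ (R1 # replicate k R2 @ [R1])) \<in> M_cong"
    using pres_cong.ctx[OF pres_cong.sym[OF defining_relation], of "R1 # replicate k R2" "[]"]
    by (simp add: Delta_split_left)
  have 2: "((R1 # replicate k R2 @ [R1]) @ (replicate k R2 @ [R1]), replicate (Suc k) R2 @ (replicate k R2 @ [R1])) \<in> M_cong"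
    using pres_cong.ctx[OF defining_relation, of "[]" "replicate k R2 @ [R1]"] by simp
  have "(R1 # replicate k R2) @ (R1 # replicate k R2 @ [R1]) = (R1 # replicate k R2 @ [R1]) @ (replicate k R2 @ [R1])"
    by simp
  moreover have "replicate (Suc k) R2 @ (replicate k R2 @ [R1]) = Delta_word @ [R1]"
    by (simp add: Delta_split_right)
  ultimately show ?thesis using 1 2 pres_cong.trans by metis
qed

lemma Delta_commute: "(w @ Delta_word, Delta_word @ w) \<in> M_cong"
proof (induction w)
  case Nil then show ?case by (simp add: pres_cong.refl)
next
  case (Cons s w)
  have 1: "([s] @ (w @ Delta_word) @ [], [s] @ (Delta_word @ w) @ []) \<in> M_cong" by (rule pres_cong.ctx[OF Cons])
  have 2: "([] @ ([s] @ Delta_word) @ w, [] @ (Delta_word @ [s]) @ w) \<in> M_cong"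
  proof (cases s)
    case R1 then show ?thesis using pres_cong.ctx[OF R1_Delta_commute, of "[]" w] by simp
  next
    case R2 then show ?thesis by (simp add: pres_cong.refl replicate_append_same)
  qed
  show ?case using 1 2 pres_cong.trans by fastforce
qed

lemma fst_shift_nonneg: "fst p \<ge> 0 \<Longrightarrow> j \<ge> 0 \<Longrightarrow> fst (shift j p) \<ge> 0"
proof -
  assume a: "fst p \<ge> 0" "j \<ge> 0"
  have "\<And>r::nat. (int r + j) div int m \<ge> 0" using a m_pos by (simp add: pos_imp_zdiv_nonneg_iff)
  then show ?thesis using a by (cases p; cases "snd p") (auto simp: shift_Cons)
qed

lemma fst_step_nonneg: "normal p \<Longrightarrow> fst p \<ge> 0 \<Longrightarrow> fst (step s p) \<ge> 0"
  by (cases s; cases p; cases "snd p") (auto simp: fst_shift_nonneg)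

lemma fst_run_nonneg: "normal p \<Longrightarrow> fst p \<ge> 0 \<Longrightarrow> fst (run w p) \<ge> 0"
  by (induction w arbitrary: p) (auto simp: fst_step_nonneg normal_step)

lemma state_word_shift_1: "normal p \<Longrightarrow> fst p \<ge> 0 \<Longrightarrow> (state_word (shift 1 p), state_word p @ [R2]) \<in> M_cong"
proof -
  assume v: "normal p" and n: "fst p \<ge> 0"
  obtain n rs where p: "p = (n, rs)" by (cases p)
  show ?thesis
  proof (cases rs)
    case Nil
    have "nat (n + 1) = Suc (nat n)" using n p by simp
    then show ?thesis using p Nil by (simp add: state_word_def pres_cong.refl replicate_append_same)
  next
    case (Cons r rr)
    have r: "r < m" using v p Cons by (simp add: normal_def)
    show ?thesis
    proof (cases "Suc r < m")
      case True
      then have "shift 1 p = (n, Suc r # rr)" using p Cons by (simp add: shift_Cons)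
      then show ?thesis using p Cons by (simp add: state_word_def block_def pres_cong.refl replicate_append_same)
    next
      case False
      then have rm: "Suc r = m" using r by simp
      then have "int r + 1 = int m" by simp
      then have "shift 1 p = (n + int m, 0 # rr)" using p Cons m_pos by (simp add: shift_Cons)
      then have l: "state_word (shift 1 p) = replicate (nat n) R2 @ Delta_word @ concat (map block (rev rr)) @ [R1]"
        using n p by (simp add: state_word_def block_def nat_add_distrib replicate_add)
      have rr: "state_word p @ [R2] = replicate (nat n) R2 @ (concat (map block (rev rr)) @ [R1]) @ Delta_word"
        using p Cons rm[symmetric] by (simp add: state_word_def block_def replicate_append_same)
      show ?thesis unfolding l rr
        using pres_cong.ctx[OF Delta_commute[of "concat (map block (rev rr)) @ [R1]"], of "replicate (nat n) R2" "[]"]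
        by (simp add: pres_cong.sym)
    qed
  qed
qed

lemma normal_shift_nonneg: "normal p \<Longrightarrow> fst p \<ge> 0 \<Longrightarrow> normal (shift (int j) p) \<and> fst (shift (int j) p) \<ge> 0"
  using normal_shift fst_shift_nonneg by simp

lemma state_word_shift: "normal p \<Longrightarrow> fst p \<ge> 0 \<Longrightarrow> (state_word (shift (int j) p), state_word p @ replicate j R2) \<in> M_cong"
proof (induction j)
  case 0 then show ?case by (simp add: shift_0 normal_head_bounded pres_cong.refl)
next
  case (Suc j)
  have e: "shift (int (Suc j)) p = shift 1 (shift (int j) p)" using shift_add by (simp add: add.commute)
  have 1: "(state_word (shift 1 (shift (int j) p)), state_word (shift (int j) p) @ [R2]) \<in> M_cong"
    using state_word_shift_1 normal_shift_nonneg[OF Suc.prems] by blast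
  have 2: "(state_word (shift (int j) p) @ [R2], (state_word p @ replicate j R2) @ [R2]) \<in> M_cong"
    using pres_cong.ctx[OF Suc.IH[OF Suc.prems], of "[]" "[R2]"] by simp
  have e2: "state_word p @ replicate (Suc j) R2 = (state_word p @ replicate j R2) @ [R2]"
    by (simp add: replicate_append_same)
  show ?case unfolding e e2 using 1 2 by (rule pres_cong.trans)
qed

lemma state_word_step: "normal p \<Longrightarrow> fst p \<ge> 0 \<Longrightarrow> (state_word (step s p), state_word p @ [s]) \<in> M_cong"
proof (cases s)
  case R2
  assume "normal p" "fst p \<ge> 0"
  then show ?thesis using R2 state_word_shift_1 by simp
next
  case R1
  assume v: "normal p" and n: "fst p \<ge> 0"
  obtain n rs where p: "p = (n, rs)" by (cases p)
  show ?thesis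
  proof (cases rs)
    case Nil then show ?thesis using p R1 by (simp add: state_word_def block_def pres_cong.refl)
  next
    case (Cons r rr)
    show ?thesis
    proof (cases "r = k")
      case False then show ?thesis using p R1 Cons by (simp add: state_word_def block_def pres_cong.refl)
    next
      case True
      have vr: "normal (n, rr)" using v p Cons by (auto simp: normal_def split: list.splits)
      have n0: "fst (n, rr) \<ge> 0" using n p by simp
      have 1: "(state_word (shift (int (Suc k)) (n, rr)), state_word (n, rr) @ replicate (Suc k) R2) \<in> M_cong"
        by (rule state_word_shift[OF vr n0])
      have 2: "(state_word (n, rr) @ (R1 # replicate k R2 @ [R1]), state_word (n, rr) @ replicate (Suc k) R2) \<in> M_cong"
        using pres_cong.ctx[OF defining_relation, of "state_word (n, rr)" "[]"] by simp
      have e: "state_word p @ [s] = state_word (n, rr) @ (R1 # replicate k R2 @ [R1])"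
        using p Cons True R1 by (simp add: state_word_def block_def)
      have a: "step s p = shift (int (Suc k)) (n, rr)" using p Cons True R1 by (simp add: add.commute)
      show ?thesis unfolding a e by (rule pres_cong.trans[OF 1 pres_cong.sym[OF 2]])
    qed
  qed
qed

definition init :: "int \<times> nat list" where "init = (0, [])"

definition nf :: "gen2 list \<Rightarrow> int \<times> nat list" where "nf w = run w init"

lemma normal_init: "normal init" by (simp add: init_def normal_def)

lemma normal_nf: "normal (nf w)" by (simp add: nf_def normal_run normal_init)
lemma fst_nf_nonneg: "fst (nf w) \<ge> 0" unfolding nf_def by (rule fst_run_nonneg[OF normal_init]) (simp add: init_def)

lemma state_word_nf: "(state_word (nf w), w) \<in> M_cong"
proof (induction w rule: rev_induct)
  case Nil then show ?case by (simp add: nf_def init_def state_word_def pres_cong.refl)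
next
  case (snoc s w)
  have e: "nf (w @ [s]) = step s (nf w)" by (simp add: nf_def)
  have 1: "(state_word (step s (nf w)), state_word (nf w) @ [s]) \<in> M_cong" using state_word_step normal_nf fst_nf_nonneg by blast
  have 2: "(state_word (nf w) @ [s], w @ [s]) \<in> M_cong" using pres_cong.ctx[OF snoc, of "[]" "[s]"] by simp
  show ?case using e 1 2 pres_cong.trans by metis
qed

lemma nf_pres_cong: "(u, v) \<in> M_cong \<Longrightarrow> nf u = nf v"
  by (simp add: nf_def run_pres_cong normal_init)

lemma pres_cong_iff_nf: "(u, v) \<in> M_cong \<longleftrightarrow> nf u = nf v"
  using nf_pres_cong state_word_nf by (metis pres_cong.sym pres_cong.trans)

lemma run_blocks: "normal (n, rs) \<Longrightarrow> run (concat (map block (rev rs))) (n, []) = (n, rs)"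
proof (induction rs)
  case Nil then show ?case by simp
next
  case (Cons r rs)
  have vr: "normal (n, rs)" using Cons.prems by (auto simp: normal_def split: list.splits)
  have r: "r < m" using Cons.prems by (simp add: normal_def)
  have a: "step R1 (n, rs) = (n, 0 # rs)"
  proof (cases rs)
    case (Cons s rs')
    then have "s \<noteq> k" using Cons.prems by (simp add: normal_def)
    then show ?thesis using Cons by simp
  qed simp
  have "run (concat (map block (rev (r # rs)))) (n, []) = run (block r) (n, rs)"
    using Cons.IH[OF vr] by simp
  also have "\<dots> = run (replicate r R2) (n, 0 # rs)" using a by (simp add: block_def)
  also have "\<dots> = shift (int r) (n, 0 # rs)" by (rule run_replicate_R2) (simp add: head_bounded_def m_pos)
  also have "\<dots> = (n, r # rs)" using r by (simp add: shift_Cons)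
  finally show ?case .
qed

lemma nf_state_word: "normal p \<Longrightarrow> fst p \<ge> 0 \<Longrightarrow> nf (state_word p) = p"
proof -
  assume v: "normal p" and n: "fst p \<ge> 0"
  obtain n rs where p: "p = (n, rs)" by (cases p)
  have "nf (state_word p) = run (concat (map block (rev rs))) (run (replicate (nat n) R2) init)"
    using p by (simp add: nf_def state_word_def)
  also have "run (replicate (nat n) R2) init = (n, [])"
    using n p by (simp add: run_replicate_R2 init_def head_bounded_def)
  finally show ?thesis using run_blocks v p by simp
qed

lemma cancel_right_letter: "(u @ [s], v @ [s]) \<in> M_cong \<Longrightarrow> (u, v) \<in> M_cong"
proof -
  assume "(u @ [s], v @ [s]) \<in> M_cong"
  then have "nf (u @ [s]) = nf (v @ [s])" by (rule nf_pres_cong)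
  then have "step s (nf u) = step s (nf v)" by (simp add: nf_def)
  then have "step_inv s (step s (nf u)) = step_inv s (step s (nf v))" by simp
  then have "nf u = nf v" using step_inv_step normal_nf by simp
  then show ?thesis by (simp add: pres_cong_iff_nf)
qed

lemma cancel_right: "(u @ x, v @ x) \<in> M_cong \<Longrightarrow> (u, v) \<in> M_cong"
proof (induction x arbitrary: u v rule: rev_induct)
  case Nil then show ?case by simp
next
  case (snoc s x)
  then show ?case using cancel_right_letter[of "u @ x" s "v @ x"] by simp
qed

lemma rev_pres_cong: "(u, v) \<in> M_cong \<Longrightarrow> (rev u, rev v) \<in> M_cong"
proof (induction rule: pres_cong.induct)
  case (base u v)
  then have "(rev u, rev v) = (R1 # replicate k R2 @ [R1], replicate (Suc k) R2)" by (simp add: rel_M_eq replicate_append_same)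
  then show ?case using defining_relation by simp
next
  case (ctx u v x y)
  then show ?case using pres_cong.ctx[OF ctx.IH, of "rev y" "rev x"] by simp
qed (auto intro: pres_cong.intros)

lemma rev_pres_cong_iff: "(rev u, rev v) \<in> M_cong \<longleftrightarrow> (u, v) \<in> M_cong"
  using rev_pres_cong[of "rev u" "rev v"] rev_pres_cong[of u v] by auto

lemma cancel_left: "(x @ u, x @ v) \<in> M_cong \<Longrightarrow> (u, v) \<in> M_cong"
proof -
  assume "(x @ u, x @ v) \<in> M_cong"
  then have "(rev u @ rev x, rev v @ rev x) \<in> M_cong" using rev_pres_cong by fastforce
  then have "(rev u, rev v) \<in> M_cong" by (rule cancel_right)
  then show ?thesis by (simp add: rev_pres_cong_iff)
qed

definition wt :: "gen2 list \<Rightarrow> nat" where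
  "wt w = sum_list (map (\<lambda>s. if s = R1 then 1 else 2) w)"

lemma wt_append[simp]: "wt (u @ v) = wt u + wt v" by (simp add: wt_def)
lemma wt_Nil[simp]: "wt [] = 0" by (simp add: wt_def)
lemma wt_Cons[simp]: "wt (s # w) = (if s = R1 then 1 else 2) + wt w" by (simp add: wt_def)
lemma wt_rep[simp]: "wt (replicate j R2) = 2 * j" by (induction j) auto
lemma wt_zero: "wt w = 0 \<Longrightarrow> w = []" by (cases w) (auto split: if_splits)
lemma length_le_wt: "length w \<le> wt w" by (induction w) auto

lemma wt_pres_cong: "(u, v) \<in> M_cong \<Longrightarrow> wt u = wt v"
  by (induction rule: pres_cong.induct) (auto simp: rel_M_eq)

lemma Delta_pow_commute: "(w @ replicate (m * j) R2, replicate (m * j) R2 @ w) \<in> M_cong"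
proof (induction j arbitrary: w)
  case 0 then show ?case by (simp add: pres_cong.refl)
next
  case (Suc j)
  have e: "replicate (m * Suc j) R2 = Delta_word @ replicate (m * j) R2" by (simp add: replicate_add[symmetric])
  have 1: "(w @ Delta_word @ replicate (m * j) R2, Delta_word @ w @ replicate (m * j) R2) \<in> M_cong"
    using pres_cong.ctx[OF Delta_commute[of w], of "[]" "replicate (m * j) R2"] by simp
  have 2: "(Delta_word @ w @ replicate (m * j) R2, Delta_word @ replicate (m * j) R2 @ w) \<in> M_cong"
    using pres_cong.ctx[OF Suc.IH[of w], of Delta_word "[]"] by simp
  show ?case unfolding e using pres_cong.trans[OF 1 2] by simp
qed

definition Delta_complement :: "gen2 \<Rightarrow> gen2 list" where
  "Delta_complement s = (if s = R1 then replicate k R2 @ R1 # replicate k R2 else replicate (m - 1) R2)"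

lemma Delta_complement_left: "(s # Delta_complement s, Delta_word) \<in> M_cong"
proof (cases s)
  case R1
  have "(R1 # replicate k R2 @ [R1] @ replicate k R2, replicate (Suc k) R2 @ replicate k R2) \<in> M_cong"
    using pres_cong.ctx[OF defining_relation, of "[]" "replicate k R2"] by simp
  then show ?thesis using R1 Delta_split_right by (simp add: Delta_complement_def)
next
  case R2
  have "R2 # replicate (m - 1) R2 = Delta_word" using m_pos by (cases m) auto
  then show ?thesis using R2 by (simp add: Delta_complement_def pres_cong.refl)
qed

lemma common_multiple_Delta_pow: "\<exists>t. (w @ t, replicate (m * length w) R2) \<in> M_cong"
proof (induction w)
  case Nil then show ?case by (auto intro: pres_cong.refl)
next
  case (Cons s w)
  then obtain t where t: "(w @ t, replicate (m * length w) R2) \<in> M_cong" by blast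
  let ?Dj = "replicate (m * length w) R2"
  have 1: "(s # w @ t @ Delta_complement s, s # ?Dj @ Delta_complement s) \<in> M_cong"
    using pres_cong.ctx[OF t, of "[s]" "Delta_complement s"] by simp
  have 2: "([s] @ ?Dj @ Delta_complement s, ?Dj @ [s] @ Delta_complement s) \<in> M_cong"
    using pres_cong.ctx[OF Delta_pow_commute[of "[s]" "length w"], of "[]" "Delta_complement s"] by simp
  have 3: "(?Dj @ (s # Delta_complement s), ?Dj @ Delta_word) \<in> M_cong"
    using pres_cong.ctx[OF Delta_complement_left[of s], of ?Dj "[]"] by simp
  have e: "?Dj @ Delta_word = replicate (m * length (s # w)) R2" by (simp add: replicate_add[symmetric] add.commute)
  have "(s # w @ t @ Delta_complement s, replicate (m * length (s # w)) R2) \<in> M_cong"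
    using pres_cong.trans[OF 1 pres_cong.trans[OF _ 3]] 2 e by simp
  then show ?case by (metis append_Cons append_assoc)
qed

lemma nf_R2_Cons: "nf (R2 # y) = (fst (nf y) + 1, snd (nf y))"
proof -
  obtain n rs where p: "nf y = (n, rs)" by fastforce
  have n: "n \<ge> 0" using fst_nf_nonneg p by (metis fst_conv)
  have "(R2 # y, R2 # state_word (n, rs)) \<in> M_cong"
    using pres_cong.ctx[OF pres_cong.sym[OF state_word_nf[of y]], of "[R2]" "[]"] p by simp
  moreover have "R2 # state_word (n, rs) = state_word (n + 1, rs)"
    using n by (simp add: state_word_def nat_add_distrib)
  moreover have "normal (n + 1, rs)" using normal_nf[of y] p by (simp add: normal_def)
  ultimately show ?thesis using nf_pres_cong nf_state_word n p by fastforce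
qed

lemma nf_R1_Cons_state_word:
  assumes "normal (n, rs)" "n \<ge> 0" "nat n < m" "rs = [] \<or> nat n \<noteq> k"
  shows "nf (R1 # state_word (n, rs)) = (0, rs @ [nat n])"
proof -
  have "normal (0, rs @ [nat n])" using assms by (cases rs) (auto simp: normal_def)
  moreover have "state_word (0, rs @ [nat n]) = R1 # state_word (n, rs)"
    by (simp add: state_word_def block_def)
  ultimately show ?thesis by (metis nf_state_word fst_conv order_refl)
qed

text \<open>The normal form of a word beginning with R2 has a nonzero power of R2 in front, so the
  leading R1 must be absorbed, either by the relation or by a factor Delta.\<close>

lemma R1_R2_prefix_imp_lcm_prefix:
  assumes "(R1 # z, R2 # y) \<in> M_cong"
  shows "\<exists>t. (R1 # z, replicate (Suc k) R2 @ t) \<in> M_cong"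
proof -
  obtain n rs where p: "nf z = (n, rs)" by fastforce
  have n: "n \<ge> 0" using fst_nf_nonneg p by (metis fst_conv)
  let ?W = "concat (map block (rev rs))"
  have z: "(R1 # z, R1 # replicate (nat n) R2 @ ?W) \<in> M_cong"
    using pres_cong.ctx[OF pres_cong.sym[OF state_word_nf[of z]], of "[R1]" "[]"] p
    by (simp add: state_word_def)
  consider (relation) "rs \<noteq> []" "nat n = k" | (Delta) "m \<le> nat n" | (short) "nat n < m" "rs = [] \<or> nat n \<noteq> k"
    by linarith
  then show ?thesis
  proof cases
    case relation
    then obtain r rr where "?W = R1 # replicate r R2 @ concat (map block rr)"
      by (cases "rev rs") (auto simp: block_def)
    moreover have "(R1 # replicate k R2 @ [R1] @ (replicate r R2 @ concat (map block rr)),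
           replicate (Suc k) R2 @ (replicate r R2 @ concat (map block rr))) \<in> M_cong"
      using pres_cong.ctx[OF defining_relation, of "[]" "replicate r R2 @ concat (map block rr)"] by simp
    ultimately show ?thesis using z relation by (auto intro: pres_cong.trans)
  next
    case Delta
    let ?X = "replicate (nat n - m) R2 @ ?W"
    have "replicate (nat n) R2 = Delta_word @ replicate (nat n - m) R2"
      using Delta by (simp add: replicate_add[symmetric])
    moreover have "([] @ ([R1] @ Delta_word) @ ?X, [] @ (Delta_word @ [R1]) @ ?X) \<in> M_cong"
      by (rule pres_cong.ctx[OF R1_Delta_commute])
    moreover have "Delta_word @ [R1] @ ?X = replicate (Suc k) R2 @ (replicate k R2 @ [R1] @ ?X)"
      by (simp add: Delta_split_right)
    ultimately show ?thesis using z by (auto intro: pres_cong.trans)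
  next
    case short
    have "fst (nf (R1 # z)) = 0"
      using nf_pres_cong[OF z] nf_R1_Cons_state_word[OF _ n short] normal_nf[of z] p
      by (simp add: state_word_def)
    moreover have "fst (nf (R2 # y)) > 0" using nf_R2_Cons fst_nf_nonneg[of y] by simp
    ultimately show ?thesis using nf_pres_cong[OF assms] by simp
  qed
qed

end

section \<open>M(m) is a Garside monoid\<close>

context odd_dihedral
begin

abbreviation cls :: "gen2 list \<Rightarrow> gen2 list set" where
  "cls w \<equiv> pres_class (rel_M m) w"

lemma carrier_M: "carrier (M_mon m) = range cls"
  by (simp add: M_mon_def carrier_pres_monoid)

lemma cls_in_carrier_M: "cls w \<in> carrier (M_mon m)"
  by (simp add: carrier_M)

lemma mult_M: "cls u \<otimes>\<^bsub>M_mon m\<^esub> cls v = cls (u @ v)"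
  by (simp add: M_mon_def mult_pres_class)

lemma one_M: "\<one>\<^bsub>M_mon m\<^esub> = cls []"
  by (simp add: M_mon_def one_pres_monoid)

lemma monoid_M: "monoid (M_mon m)"
  by (simp add: M_mon_def monoid_pres_monoid)

lemma Delta_eq: "Delta m = cls Delta_word"
  by (simp add: Delta_def)

definition weight :: "gen2 list set \<Rightarrow> nat" where
  "weight A = wt (SOME w. w \<in> A)"

lemma weight_cls: "weight (cls w) = wt w"
proof -
  have "w \<in> cls w" by (simp add: pres_cong.refl)
  then have "(SOME w'. w' \<in> cls w) \<in> cls w" by (rule someI)
  then show ?thesis by (simp add: weight_def wt_pres_cong pres_cong.sym)
qed

lemma cancel_left_M:
  assumes "x \<in> carrier (M_mon m)" "y \<in> carrier (M_mon m)" "z \<in> carrier (M_mon m)"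
    and "x \<otimes>\<^bsub>M_mon m\<^esub> y = x \<otimes>\<^bsub>M_mon m\<^esub> z"
  shows "y = z"
proof -
  obtain a b c where "x = cls a" "y = cls b" "z = cls c" using assms(1-3) by (auto simp: carrier_M)
  with assms(4) show ?thesis by (simp add: mult_M pres_class_eq_iff cancel_left)
qed

lemma cancel_right_M:
  assumes "x \<in> carrier (M_mon m)" "y \<in> carrier (M_mon m)" "z \<in> carrier (M_mon m)"
    and "y \<otimes>\<^bsub>M_mon m\<^esub> x = z \<otimes>\<^bsub>M_mon m\<^esub> x"
  shows "y = z"
proof -
  obtain a b c where "x = cls a" "y = cls b" "z = cls c" using assms(1-3) by (auto simp: carrier_M)
  with assms(4) show ?thesis by (simp add: mult_M pres_class_eq_iff cancel_right)
qed

lemma graded_left_cancel_M: "graded_left_cancel_monoid (M_mon m) weight"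
proof (intro graded_left_cancel_monoid.intro monoid_M graded_left_cancel_monoid_axioms.intro)
  show "y = z" if "x \<in> carrier (M_mon m)" "y \<in> carrier (M_mon m)" "z \<in> carrier (M_mon m)"
    "x \<otimes>\<^bsub>M_mon m\<^esub> y = x \<otimes>\<^bsub>M_mon m\<^esub> z" for x y z
    using cancel_left_M that by blast
  show "weight (x \<otimes>\<^bsub>M_mon m\<^esub> y) = weight x + weight y"
    if "x \<in> carrier (M_mon m)" "y \<in> carrier (M_mon m)" for x y
    using that by (auto simp: carrier_M mult_M weight_cls)
  show "x = \<one>\<^bsub>M_mon m\<^esub>" if "x \<in> carrier (M_mon m)" "weight x = 0" for x
    using that by (auto simp: carrier_M one_M weight_cls dest: wt_zero)
qed

lemma lcm_R1_R2:
  "is_ldvd_lcm (M_mon m) (cls [R1]) (cls [R2]) (cls (replicate (Suc k) R2))"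
  unfolding is_ldvd_lcm_def
proof (intro conjI ballI impI)
  show "cls (replicate (Suc k) R2) \<in> carrier (M_mon m)" by (rule cls_in_carrier_M)
  have "cls (replicate (Suc k) R2) = cls [R1] \<otimes>\<^bsub>M_mon m\<^esub> cls (replicate k R2 @ [R1])"
    using defining_relation by (simp add: mult_M pres_class_eq_iff pres_cong.sym)
  then show "ldvd (M_mon m) (cls [R1]) (cls (replicate (Suc k) R2))"
    using cls_in_carrier_M by (auto simp: ldvd_def)
  have "cls (replicate (Suc k) R2) = cls [R2] \<otimes>\<^bsub>M_mon m\<^esub> cls (replicate k R2)"
    by (simp add: mult_M)
  then show "ldvd (M_mon m) (cls [R2]) (cls (replicate (Suc k) R2))"
    using cls_in_carrier_M by (auto simp: ldvd_def)
next
  fix c assume "ldvd (M_mon m) (cls [R1]) c \<and> ldvd (M_mon m) (cls [R2]) c"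
  then obtain z y where "c = cls (R1 # z)" "c = cls (R2 # y)"
    by (auto simp: ldvd_def carrier_M mult_M)
  then have "(R1 # z, R2 # y) \<in> M_cong" by (metis pres_class_eq_iff)
  then obtain t where "(R1 # z, replicate (Suc k) R2 @ t) \<in> M_cong"
    using R1_R2_prefix_imp_lcm_prefix by blast
  then have "c = cls (replicate (Suc k) R2) \<otimes>\<^bsub>M_mon m\<^esub> cls t"
    using \<open>c = cls (R1 # z)\<close> by (simp add: mult_M pres_class_eq_iff)
  then show "ldvd (M_mon m) (cls (replicate (Suc k) R2)) c"
    using cls_in_carrier_M by (auto simp: ldvd_def)
qed

lemma common_multiple_M:
  assumes "x \<in> carrier (M_mon m)" and "y \<in> carrier (M_mon m)"
  shows "\<exists>c. ldvd (M_mon m) x c \<and> ldvd (M_mon m) y c"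
proof -
  obtain u v where uv: "x = cls u" "y = cls v" using assms by (auto simp: carrier_M)
  obtain t1 where t1: "(u @ t1, replicate (m * length u) R2) \<in> M_cong"
    using common_multiple_Delta_pow by blast
  obtain t2 where t2: "(v @ t2, replicate (m * length v) R2) \<in> M_cong"
    using common_multiple_Delta_pow by blast
  let ?N = "replicate (m * length u) R2 @ replicate (m * length v) R2"
  have "(u @ t1 @ replicate (m * length v) R2, ?N) \<in> M_cong"
    using pres_cong_append[OF t1 pres_cong.refl] by simp
  moreover have "(v @ t2 @ replicate (m * length u) R2, ?N) \<in> M_cong"
    using pres_cong_append[OF t2 pres_cong.refl, of "replicate (m * length u) R2"]
    by (simp add: replicate_add[symmetric] add.commute)
  ultimately have "cls ?N = x \<otimes>\<^bsub>M_mon m\<^esub> cls (t1 @ replicate (m * length v) R2)"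
    "cls ?N = y \<otimes>\<^bsub>M_mon m\<^esub> cls (t2 @ replicate (m * length u) R2)"
    unfolding uv mult_M pres_class_eq_iff by (simp_all add: pres_cong.sym)
  then have "ldvd (M_mon m) x (cls ?N)" "ldvd (M_mon m) y (cls ?N)"
    using cls_in_carrier_M unfolding ldvd_def by blast+
  then show ?thesis by blast
qed

lemma two_atom_monoid_M: "two_atom_monoid (M_mon m) weight (cls [R1]) (cls [R2])"
proof (intro two_atom_monoid.intro graded_left_cancel_M two_atom_monoid_axioms.intro)
  show "cls [R1] \<in> carrier (M_mon m)" "cls [R2] \<in> carrier (M_mon m)"
    by (simp_all add: cls_in_carrier_M)
  have "cls [s] \<noteq> \<one>\<^bsub>M_mon m\<^esub>" for s
  proof
    assume "cls [s] = \<one>\<^bsub>M_mon m\<^esub>"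
    then have "wt [s] = wt []" by (metis one_M weight_cls)
    then show False by (cases s) simp_all
  qed
  then show "cls [R1] \<noteq> \<one>\<^bsub>M_mon m\<^esub>" "cls [R2] \<noteq> \<one>\<^bsub>M_mon m\<^esub>" by blast+
  show "\<exists>y\<in>carrier (M_mon m). x = cls [R1] \<otimes>\<^bsub>M_mon m\<^esub> y \<or> x = cls [R2] \<otimes>\<^bsub>M_mon m\<^esub> y"
    if x: "x \<in> carrier (M_mon m)" "x \<noteq> \<one>\<^bsub>M_mon m\<^esub>" for x
  proof -
    obtain w where w: "x = cls w" using x(1) by (auto simp: carrier_M)
    with x(2) obtain s w' where "x = cls (s # w')" by (cases w) (auto simp: one_M)
    then show ?thesis
      using mult_M[of "[s]" w'] cls_in_carrier_M[of w'] by (cases s) auto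
  qed
  show "\<exists>l. is_ldvd_lcm (M_mon m) (cls [R1]) (cls [R2]) l"
    using lcm_R1_R2 by blast
qed (rule common_multiple_M)

lemma ldvd_lcms_gcds_M: "has_lcms_gcds (carrier (M_mon m)) (ldvd (M_mon m))"
  by (rule two_atom_monoid.has_lcms_gcds[OF two_atom_monoid_M])

definition rev_M :: "gen2 list set \<Rightarrow> gen2 list set" where
  "rev_M A = rev ` A"

lemma rev_M_cls: "rev_M (cls w) = cls (rev w)"
proof -
  have "rev ` cls w = cls (rev w)"
  proof (intro equalityI subsetI)
    fix z assume "z \<in> rev ` cls w"
    then show "z \<in> cls (rev w)" using rev_pres_cong by auto
  next
    fix z assume "z \<in> cls (rev w)"
    then have "(w, rev z) \<in> M_cong" using rev_pres_cong[of "rev w" z] by simp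
    then show "z \<in> rev ` cls w" by (auto intro: image_eqI[of z rev "rev z"])
  qed
  then show ?thesis by (simp add: rev_M_def)
qed

lemma bij_rev_M: "bij_betw rev_M (carrier (M_mon m)) (carrier (M_mon m))"
proof (rule bij_betw_byWitness[of _ rev_M])
  show "\<forall>x\<in>carrier (M_mon m). rev_M (rev_M x) = x"
    by (auto simp: carrier_M rev_M_cls)
qed (auto simp: carrier_M rev_M_cls)

lemma rdvd_iff_ldvd_rev_M:
  assumes "x \<in> carrier (M_mon m)" and "y \<in> carrier (M_mon m)"
  shows "rdvd (M_mon m) x y \<longleftrightarrow> ldvd (M_mon m) (rev_M x) (rev_M y)"
proof -
  obtain u v where uv: "x = cls u" "y = cls v" using assms by (auto simp: carrier_M)
  have "rdvd (M_mon m) x y \<longleftrightarrow> (\<exists>w. cls v = cls (w @ u))"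
    by (auto simp: rdvd_def uv carrier_M mult_M)
  also have "\<dots> \<longleftrightarrow> (\<exists>w. cls (rev v) = cls (rev u @ w))"
    by (metis pres_class_eq_iff rev_pres_cong_iff rev_append rev_rev_ident)
  also have "\<dots> \<longleftrightarrow> ldvd (M_mon m) (rev_M x) (rev_M y)"
    by (auto simp: ldvd_def uv carrier_M mult_M rev_M_cls)
  finally show ?thesis .
qed

lemma rdvd_lcms_gcds_M: "has_lcms_gcds (carrier (M_mon m)) (rdvd (M_mon m))"
  using has_lcms_gcds_transfer[OF ldvd_lcms_gcds_M bij_rev_M] rdvd_iff_ldvd_rev_M by blast

lemma Delta_central: "x \<in> carrier (M_mon m) \<Longrightarrow> x \<otimes>\<^bsub>M_mon m\<^esub> Delta m = Delta m \<otimes>\<^bsub>M_mon m\<^esub> x"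
proof -
  assume "x \<in> carrier (M_mon m)"
  then obtain w where "x = cls w" by (auto simp: carrier_M)
  moreover have "cls (w @ Delta_word) = cls (Delta_word @ w)"
    using Delta_commute by (simp only: pres_class_eq_iff)
  ultimately show ?thesis by (simp add: Delta_eq mult_M)
qed

lemma Delta_in_carrier: "Delta m \<in> carrier (M_mon m)"
  by (simp add: Delta_eq cls_in_carrier_M)

lemma ldvd_Delta_iff_rdvd_Delta:
  assumes a: "a \<in> carrier (M_mon m)"
  shows "ldvd (M_mon m) a (Delta m) \<longleftrightarrow> rdvd (M_mon m) a (Delta m)"
proof -
  interpret monoid "M_mon m" by (rule monoid_M)
  have "b \<otimes>\<^bsub>M_mon m\<^esub> a = Delta m \<longleftrightarrow> a \<otimes>\<^bsub>M_mon m\<^esub> b = Delta m" if b: "b \<in> carrier (M_mon m)" for b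
  proof -
    have "a \<otimes>\<^bsub>M_mon m\<^esub> (b \<otimes>\<^bsub>M_mon m\<^esub> a) = (a \<otimes>\<^bsub>M_mon m\<^esub> b) \<otimes>\<^bsub>M_mon m\<^esub> a"
      using a b by (simp add: m_assoc)
    moreover have "a \<otimes>\<^bsub>M_mon m\<^esub> Delta m = Delta m \<otimes>\<^bsub>M_mon m\<^esub> a"
      by (rule Delta_central[OF a])
    ultimately show ?thesis
      using cancel_left_M[OF a] cancel_right_M[OF a] a b Delta_in_carrier by (metis m_closed)
  qed
  then show ?thesis by (auto simp: ldvd_def rdvd_def)
qed

lemma letter_ldvd_Delta: "ldvd (M_mon m) (cls [s]) (Delta m)"
proof -
  have "Delta m = cls [s] \<otimes>\<^bsub>M_mon m\<^esub> cls (Delta_complement s)"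
    using pres_cong.sym[OF Delta_complement_left[of s]]
    by (simp add: Delta_eq mult_M pres_class_eq_iff)
  then show ?thesis using cls_in_carrier_M by (auto simp: ldvd_def)
qed

lemma finite_gen2_UNIV: "finite (UNIV :: gen2 set)"
proof -
  have "(UNIV :: gen2 set) = {R1, R2}" using gen2.exhaust by auto
  then show ?thesis by (metis finite.emptyI finite_insert)
qed

lemma finite_ldvd_Delta: "finite {a \<in> carrier (M_mon m). ldvd (M_mon m) a (Delta m)}"
proof (rule finite_subset)
  show "{a \<in> carrier (M_mon m). ldvd (M_mon m) a (Delta m)} \<subseteq> cls ` {w. set w \<subseteq> UNIV \<and> length w \<le> 2 * m}"
  proof
    fix a assume "a \<in> {a \<in> carrier (M_mon m). ldvd (M_mon m) a (Delta m)}"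
    then obtain w v where "a = cls w" "Delta m = cls w \<otimes>\<^bsub>M_mon m\<^esub> cls v"
      by (auto simp: ldvd_def carrier_M)
    moreover from this have "wt w + wt v = wt Delta_word"
      by (metis Delta_eq mult_M weight_cls wt_append)
    then have "length w \<le> 2 * m" using length_le_wt[of w] by simp
    ultimately show "a \<in> cls ` {w. set w \<subseteq> UNIV \<and> length w \<le> 2 * m}" by auto
  qed
  show "finite (cls ` {w. set w \<subseteq> UNIV \<and> length w \<le> 2 * m})"
    using finite_lists_length_le[OF finite_gen2_UNIV] by simp
qed

lemma Delta_divisors_generate:
  assumes "x \<in> carrier (M_mon m)"
  shows "\<exists>l. set l \<subseteq> {a \<in> carrier (M_mon m). ldvd (M_mon m) a (Delta m)} \<and>
    x = foldr (\<lambda>a b. a \<otimes>\<^bsub>M_mon m\<^esub> b) l \<one>\<^bsub>M_mon m\<^esub>"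
proof -
  obtain w where "x = cls w" using assms by (auto simp: carrier_M)
  then show ?thesis
    using letter_ldvd_Delta cls_in_carrier_M foldr_mult_pres_class[of "rel_M m" w]
    by (intro exI[of _ "map (\<lambda>s. cls [s]) w"]) (auto simp: M_mon_def)
qed

theorem garside_M: "garside_monoid (M_mon m) (Delta m)"
  unfolding garside_monoid_def
proof (intro conjI)
  show "\<forall>a\<in>carrier (M_mon m). \<forall>b\<in>carrier (M_mon m). \<forall>c\<in>carrier (M_mon m).
      (a \<otimes>\<^bsub>M_mon m\<^esub> b = a \<otimes>\<^bsub>M_mon m\<^esub> c \<longrightarrow> b = c) \<and> (b \<otimes>\<^bsub>M_mon m\<^esub> a = c \<otimes>\<^bsub>M_mon m\<^esub> a \<longrightarrow> b = c)"
    using cancel_left_M cancel_right_M by blast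
  show "\<exists>len :: gen2 list set \<Rightarrow> nat. (\<forall>a\<in>carrier (M_mon m). \<forall>b\<in>carrier (M_mon m). len a + len b \<le> len (a \<otimes>\<^bsub>M_mon m\<^esub> b)) \<and>
      (\<forall>a\<in>carrier (M_mon m). a \<noteq> \<one>\<^bsub>M_mon m\<^esub> \<longrightarrow> len a \<noteq> 0)"
  proof (intro exI[of _ weight] conjI ballI impI)
    fix a b assume "a \<in> carrier (M_mon m)" "b \<in> carrier (M_mon m)"
    then show "weight a + weight b \<le> weight (a \<otimes>\<^bsub>M_mon m\<^esub> b)"
      using graded_left_cancel_monoid.len_mult[OF graded_left_cancel_M] by simp
  next
    fix a assume "a \<in> carrier (M_mon m)" "a \<noteq> \<one>\<^bsub>M_mon m\<^esub>"
    then show "weight a \<noteq> 0"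
      using graded_left_cancel_monoid.len_eq_0[OF graded_left_cancel_M] by blast
  qed
  show "{a \<in> carrier (M_mon m). ldvd (M_mon m) a (Delta m)} = {a \<in> carrier (M_mon m). rdvd (M_mon m) a (Delta m)}"
    using ldvd_Delta_iff_rdvd_Delta by blast
  show "\<forall>x\<in>carrier (M_mon m). \<exists>l. set l \<subseteq> {a \<in> carrier (M_mon m). ldvd (M_mon m) a (Delta m)} \<and>
      x = foldr (\<lambda>a b. a \<otimes>\<^bsub>M_mon m\<^esub> b) l \<one>\<^bsub>M_mon m\<^esub>"
    using Delta_divisors_generate by blast
qed (simp_all add: monoid_M Delta_in_carrier ldvd_lcms_gcds_M rdvd_lcms_gcds_M finite_ldvd_Delta)

section \<open>B(m) is the group of fractions of M(m)\<close>

abbreviation cls_B :: "(gen2 \<times> bool) list \<Rightarrow> (gen2 \<times> bool) list set" where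
  "cls_B w \<equiv> pres_class (group_rels (rel_M m)) w"

lemma carrier_B: "carrier (B_grp m) = range cls_B"
  by (simp add: B_grp_def carrier_pres_group)

lemma mult_B: "cls_B u \<otimes>\<^bsub>B_grp m\<^esub> cls_B v = cls_B (u @ v)"
  by (simp add: B_grp_def mult_pres_group)

lemma group_B: "group (B_grp m)"
  by (simp add: B_grp_def group_pres_group)

lemma incl_hom: "pres_incl (rel_M m) \<in> hom (M_mon m) (B_grp m)"
  using pres_incl_hom by (simp add: M_mon_def B_grp_def)

lemma incl_one: "pres_incl (rel_M m) \<one>\<^bsub>M_mon m\<^esub> = \<one>\<^bsub>B_grp m\<^esub>"
  using pres_incl_one by (simp add: M_mon_def B_grp_def)

text \<open>The action of the generators on normal states is by bijections, so it passes to the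
  group B(m); two words with equal images in B(m) thus have the same normal form.\<close>

lemma inj_incl: "inj_on (pres_incl (rel_M m)) (carrier (M_mon m))"
proof (rule inj_onI)
  fix x y assume "x \<in> carrier (M_mon m)" "y \<in> carrier (M_mon m)"
    and "pres_incl (rel_M m) x = pres_incl (rel_M m) y"
  then obtain u v where uv: "x = cls u" "y = cls v" "cls_B (pos_word u) = cls_B (pos_word v)"
    by (auto simp: carrier_M pres_incl_class)
  then have "run_letters (pos_word u) init = run_letters (pos_word v) init"
    using run_letters_pres_cong normal_init by (simp add: pres_class_eq_iff)
  then have "nf u = nf v" by (simp add: run_letters_pos_word nf_def)
  then show "x = y" using uv by (simp add: pres_class_eq_iff pres_cong_iff_nf)
qed

lemma inv_incl_letter:
  "inv\<^bsub>B_grp m\<^esub> (pres_incl (rel_M m) (cls [s]))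
     = pres_incl (rel_M m) (cls (Delta_complement s)) \<otimes>\<^bsub>B_grp m\<^esub> inv\<^bsub>B_grp m\<^esub> (pres_incl (rel_M m) (Delta m))"
proof -
  interpret B: group "B_grp m" by (rule group_B)
  let ?i = "pres_incl (rel_M m)"
  have i: "?i x \<in> carrier (B_grp m)" if "x \<in> carrier (M_mon m)" for x
    using incl_hom that by (rule hom_in_carrier)
  have "cls [s] \<otimes>\<^bsub>M_mon m\<^esub> cls (Delta_complement s) = Delta m"
    using Delta_complement_left[of s] by (simp add: mult_M Delta_eq pres_class_eq_iff)
  then have "?i (cls [s]) \<otimes>\<^bsub>B_grp m\<^esub> ?i (cls (Delta_complement s)) = ?i (Delta m)"
    using incl_hom cls_in_carrier_M by (metis hom_mult)
  then show ?thesis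
    using i cls_in_carrier_M Delta_in_carrier
    by (metis B.inv_solve_left B.inv_solve_right B.inv_closed B.m_closed)
qed

text \<open>Since Delta is central, the denominator Delta of an inverse letter (inv_incl_letter) can
  be moved past the numerator a.\<close>

lemma inv_letter_mult_fraction:
  assumes a: "a \<in> carrier (M_mon m)" and b: "b \<in> carrier (M_mon m)"
  shows "inv\<^bsub>B_grp m\<^esub> (pres_incl (rel_M m) (cls [s])) \<otimes>\<^bsub>B_grp m\<^esub>
           (pres_incl (rel_M m) a \<otimes>\<^bsub>B_grp m\<^esub> inv\<^bsub>B_grp m\<^esub> (pres_incl (rel_M m) b))
         = pres_incl (rel_M m) (cls (Delta_complement s) \<otimes>\<^bsub>M_mon m\<^esub> a) \<otimes>\<^bsub>B_grp m\<^esub>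
           inv\<^bsub>B_grp m\<^esub> (pres_incl (rel_M m) (b \<otimes>\<^bsub>M_mon m\<^esub> Delta m))"
proof -
  interpret B: group "B_grp m" by (rule group_B)
  let ?i = "pres_incl (rel_M m)" and ?t = "cls (Delta_complement s)"
  let ?D = "pres_incl (rel_M m) (Delta m)"
  have i: "?i x \<in> carrier (B_grp m)" if "x \<in> carrier (M_mon m)" for x
    using incl_hom that by (rule hom_in_carrier)
  have imult: "?i (x \<otimes>\<^bsub>M_mon m\<^esub> y) = ?i x \<otimes>\<^bsub>B_grp m\<^esub> ?i y"
    if "x \<in> carrier (M_mon m)" "y \<in> carrier (M_mon m)" for x y
    using incl_hom that by (rule hom_mult)
  have t: "?t \<in> carrier (M_mon m)" and D: "Delta m \<in> carrier (M_mon m)"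
    by (simp_all add: cls_in_carrier_M Delta_in_carrier)
  have "?i a \<otimes>\<^bsub>B_grp m\<^esub> ?D = ?D \<otimes>\<^bsub>B_grp m\<^esub> ?i a"
    using Delta_central[OF a] imult a D by metis
  then have commute: "inv\<^bsub>B_grp m\<^esub> ?D \<otimes>\<^bsub>B_grp m\<^esub> ?i a = ?i a \<otimes>\<^bsub>B_grp m\<^esub> inv\<^bsub>B_grp m\<^esub> ?D"
    using i a D by (metis B.inv_solve_left B.inv_solve_right B.m_assoc B.m_closed B.inv_closed)
  have "inv\<^bsub>B_grp m\<^esub> (?i (cls [s])) \<otimes>\<^bsub>B_grp m\<^esub> (?i a \<otimes>\<^bsub>B_grp m\<^esub> inv\<^bsub>B_grp m\<^esub> (?i b))
      = ?i ?t \<otimes>\<^bsub>B_grp m\<^esub> (inv\<^bsub>B_grp m\<^esub> ?D \<otimes>\<^bsub>B_grp m\<^esub> ?i a) \<otimes>\<^bsub>B_grp m\<^esub> inv\<^bsub>B_grp m\<^esub> (?i b)"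
    using a b i t D by (simp add: inv_incl_letter B.m_assoc)
  also have "\<dots> = ?i ?t \<otimes>\<^bsub>B_grp m\<^esub> ?i a \<otimes>\<^bsub>B_grp m\<^esub> (inv\<^bsub>B_grp m\<^esub> ?D \<otimes>\<^bsub>B_grp m\<^esub> inv\<^bsub>B_grp m\<^esub> (?i b))"
    unfolding commute using a b i t D by (simp add: B.m_assoc)
  also have "\<dots> = ?i (?t \<otimes>\<^bsub>M_mon m\<^esub> a) \<otimes>\<^bsub>B_grp m\<^esub> inv\<^bsub>B_grp m\<^esub> (?i (b \<otimes>\<^bsub>M_mon m\<^esub> Delta m))"
    using a b i imult t D by (simp add: B.inv_mult_group)
  finally show ?thesis .
qed

lemma fraction_of_group_word:
  "\<exists>a\<in>carrier (M_mon m). \<exists>b\<in>carrier (M_mon m).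
     cls_B w = pres_incl (rel_M m) a \<otimes>\<^bsub>B_grp m\<^esub> inv\<^bsub>B_grp m\<^esub> (pres_incl (rel_M m) b)"
proof (induction w)
  case Nil
  interpret B: group "B_grp m" by (rule group_B)
  have "cls_B [] = \<one>\<^bsub>B_grp m\<^esub>" by (simp add: B_grp_def one_pres_group)
  also have "\<dots> = pres_incl (rel_M m) \<one>\<^bsub>M_mon m\<^esub> \<otimes>\<^bsub>B_grp m\<^esub> inv\<^bsub>B_grp m\<^esub> (pres_incl (rel_M m) \<one>\<^bsub>M_mon m\<^esub>)"
    by (simp add: incl_one)
  finally show ?case using monoid.one_closed[OF monoid_M] by blast
next
  case (Cons l w)
  interpret B: group "B_grp m" by (rule group_B)
  let ?i = "pres_incl (rel_M m)"
  obtain a b where ab: "a \<in> carrier (M_mon m)" "b \<in> carrier (M_mon m)"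
    "cls_B w = ?i a \<otimes>\<^bsub>B_grp m\<^esub> inv\<^bsub>B_grp m\<^esub> (?i b)"
    using Cons.IH by blast
  obtain s e where l: "l = (s, e)" by fastforce
  interpret M: monoid "M_mon m" by (rule monoid_M)
  have letter: "cls_B [(s, True)] = ?i (cls [s])" by (simp add: pres_incl_class)
  have "cls_B (l # w) = cls_B [l] \<otimes>\<^bsub>B_grp m\<^esub> cls_B w" by (simp add: mult_B)
  then have split: "cls_B (l # w) = cls_B [l] \<otimes>\<^bsub>B_grp m\<^esub> (?i a \<otimes>\<^bsub>B_grp m\<^esub> inv\<^bsub>B_grp m\<^esub> (?i b))"
    using ab(3) by simp
  show ?case
  proof (cases e)
    case True
    have "cls_B (l # w) = ?i (cls [s] \<otimes>\<^bsub>M_mon m\<^esub> a) \<otimes>\<^bsub>B_grp m\<^esub> inv\<^bsub>B_grp m\<^esub> (?i b)"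
      using split l True letter ab(1,2) cls_in_carrier_M incl_hom
      by (simp add: hom_mult B.m_assoc hom_in_carrier)
    then show ?thesis using ab(1,2) cls_in_carrier_M by blast
  next
    case False
    have "cls_B [l] = inv\<^bsub>B_grp m\<^esub> (?i (cls [s]))"
      using l False letter inv_pres_group_letter[of "rel_M m" s] by (simp add: B_grp_def)
    then have "cls_B (l # w) = ?i (cls (Delta_complement s) \<otimes>\<^bsub>M_mon m\<^esub> a) \<otimes>\<^bsub>B_grp m\<^esub>
        inv\<^bsub>B_grp m\<^esub> (?i (b \<otimes>\<^bsub>M_mon m\<^esub> Delta m))"
      using split inv_letter_mult_fraction[OF ab(1,2)] by simp
    then show ?thesis using ab(1,2) cls_in_carrier_M Delta_in_carrier by blast
  qed
qed

theorem fractions_M: "group_of_fractions (B_grp m) (M_mon m) (pres_incl (rel_M m))"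
  unfolding group_of_fractions_def
  using group_B incl_hom incl_one inj_incl fraction_of_group_word by (auto simp: carrier_B)

end

section \<open>B(m) is isomorphic to the Artin group of type I2(m)\<close>

lemma eval_word_pos_word_classes:
  "eval_word (pres_group R) (\<lambda>x. pres_class (group_rels R) (fw x)) (pos_word w)
     = pres_class (group_rels R) (concat (map fw w))"
  by (induction w) (simp_all add: mult_pres_group one_pres_group)

lemma alt_word_Suc: "alt_word x y (Suc n) = x # alt_word y x n"
  unfolding alt_word_def by (simp add: map_upt_Suc del: upt_Suc)

lemma alt_word_0: "alt_word x y 0 = []"
  by (simp add: alt_word_def)

lemma alt_word_odd: "alt_word x y (2 * k + 1) = concat (replicate k [x, y]) @ [x]"
  by (induction k) (auto simp: alt_word_Suc alt_word_0)

lemma concat_replicate_Suc: "concat (replicate (Suc k) xs) = concat (replicate k xs) @ xs"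
  by (induction k) simp_all

lemma Cons_concat_replicate_pair: "x # concat (replicate k [y, x]) = concat (replicate k [x, y]) @ [x]"
  by (induction k) auto

lemma (in group) conj_nat_pow:
  assumes "a \<in> carrier G" and "b \<in> carrier G"
  shows "(inv a \<otimes> b \<otimes> a) [^] (n::nat) = inv a \<otimes> b [^] n \<otimes> a"
proof (induction n)
  case (Suc n)
  have "(inv a \<otimes> b \<otimes> a) [^] Suc n = (inv a \<otimes> b [^] n \<otimes> a) \<otimes> (inv a \<otimes> b \<otimes> a)"
    using Suc by simp
  also have "\<dots> = inv a \<otimes> b [^] n \<otimes> (a \<otimes> inv a) \<otimes> b \<otimes> a"
    using assms by (simp only: m_assoc m_closed inv_closed nat_pow_closed)
  also have "\<dots> = inv a \<otimes> b [^] Suc n \<otimes> a"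
    using assms by (simp add: m_assoc)
  finally show ?case .
qed (use assms in simp)

context odd_dihedral
begin

abbreviation rel_artin :: "(gen2 list \<times> gen2 list) set" where
  "rel_artin \<equiv> {(alt_word R1 R2 m, alt_word R2 R1 m)}"

abbreviation cls_A :: "(gen2 \<times> bool) list \<Rightarrow> (gen2 \<times> bool) list set" where
  "cls_A w \<equiv> pres_class (group_rels rel_artin) w"

lemma alt_word_m: "alt_word x y m = concat (replicate k [x, y]) @ [x]"
  using alt_word_odd[of x y k] m_eq by simp

fun to_artin_word :: "gen2 \<Rightarrow> (gen2 \<times> bool) list" where
  "to_artin_word R1 = [(R1, True)]"
| "to_artin_word R2 = [(R1, True), (R2, True)]"

fun from_artin_word :: "gen2 \<Rightarrow> (gen2 \<times> bool) list" where
  "from_artin_word R1 = [(R1, True)]"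
| "from_artin_word R2 = [(R1, False), (R2, True)]"

definition to_artin :: "gen2 \<Rightarrow> (gen2 \<times> bool) list set" where
  "to_artin x = cls_A (to_artin_word x)"

definition from_artin :: "gen2 \<Rightarrow> (gen2 \<times> bool) list set" where
  "from_artin x = cls_B (from_artin_word x)"

lemma to_artin_respects_rels: "respects_rels (artin_I2 m) to_artin (rel_M m)"
  unfolding respects_rels_def
proof (intro conjI allI ballI)
  show "to_artin x \<in> carrier (artin_I2 m)" for x
    by (simp add: to_artin_def artin_I2_def carrier_pres_group)
  fix uv assume "uv \<in> rel_M m"
  then have uv: "uv = (R1 # replicate k R2 @ [R1], replicate (Suc k) R2)" by (simp add: rel_M_eq)
  let ?s = "(R1, True)" and ?t = "(R2, True)"
  have "(pos_word (alt_word R1 R2 m), pos_word (alt_word R2 R1 m)) \<in> pres_cong (group_rels rel_artin)"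
    by (rule pres_cong.base) (auto simp: group_rels_def)
  then have "([?s] @ concat (replicate k [?s, ?t]) @ [?s], [?s] @ concat (replicate k [?t, ?s]) @ [?t])
      \<in> pres_cong (group_rels rel_artin)"
    using pres_cong.ctx[of _ _ _ "[?s]" "[]"] by (simp add: alt_word_m map_concat)
  moreover have "[?s] @ concat (replicate k [?t, ?s]) @ [?t] = concat (replicate (Suc k) [?s, ?t])"
    using Cons_concat_replicate_pair[of ?s k ?t] by (simp only: concat_replicate_Suc) simp
  ultimately have "(concat (map to_artin_word (R1 # replicate k R2 @ [R1])),
                   concat (map to_artin_word (replicate (Suc k) R2))) \<in> pres_cong (group_rels rel_artin)"
    by (simp add: map_replicate_const del: replicate_Suc)
  then show "case uv of (u, v) \<Rightarrow> eval_word (artin_I2 m) to_artin (pos_word u) = eval_word (artin_I2 m) to_artin (pos_word v)"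
    using eval_word_pos_word_classes[of rel_artin to_artin_word]
    by (simp add: uv artin_I2_def to_artin_def[abs_def] pres_class_eq_iff)
qed

lemma R1_R2_relation_B:
  "cls_B [(R1, True)] \<otimes>\<^bsub>B_grp m\<^esub> (cls_B [(R2, True)] [^]\<^bsub>B_grp m\<^esub> k \<otimes>\<^bsub>B_grp m\<^esub> cls_B [(R1, True)])
     = cls_B [(R2, True)] [^]\<^bsub>B_grp m\<^esub> Suc k"
proof -
  interpret B: group "B_grp m" by (rule group_B)
  let ?letter = "\<lambda>x. cls_B [(x, True)]"
  have letter: "?letter x \<in> carrier (B_grp m)" for x by (simp add: carrier_B)
  have eval: "eval_word (B_grp m) ?letter w = cls_B w" for w
    using eval_word_letters[of "rel_M m" w] by (simp add: B_grp_def)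
  have "?letter R1 \<otimes>\<^bsub>B_grp m\<^esub> (?letter R2 [^]\<^bsub>B_grp m\<^esub> k \<otimes>\<^bsub>B_grp m\<^esub> ?letter R1)
      = eval_word (B_grp m) ?letter (pos_word (R1 # replicate k R2 @ [R1]))"
    using B.eval_word_append[of ?letter, OF letter] B.eval_word_pos_replicate[of ?letter, OF letter] letter
    by simp
  also have "\<dots> = eval_word (B_grp m) ?letter (pos_word (replicate (Suc k) R2))"
    using pres_cong_pos_word[OF defining_relation] by (simp only: eval pres_class_eq_iff)
  also have "\<dots> = ?letter R2 [^]\<^bsub>B_grp m\<^esub> Suc k"
    by (rule B.eval_word_pos_replicate[of ?letter, OF letter])
  finally show ?thesis .
qed

lemma from_artin_R1_R2: "from_artin R1 \<otimes>\<^bsub>B_grp m\<^esub> from_artin R2 = cls_B [(R2, True)]"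
proof -
  have "from_artin R1 \<otimes>\<^bsub>B_grp m\<^esub> from_artin R2 = cls_B ([] @ [(R1, True), (R1, False)] @ [(R2, True)])"
    by (simp add: from_artin_def mult_B)
  also have "\<dots> = cls_B [(R2, True)]"
    using pres_cong.ctx[OF pres_cong_cancel_letter[of R1 True "rel_M m"], of "[]" "[(R2, True)]"]
    by (simp only: pres_class_eq_iff) simp
  finally show ?thesis .
qed

lemma from_artin_respects_rels: "respects_rels (B_grp m) from_artin rel_artin"
  unfolding respects_rels_def
proof (intro conjI allI ballI)
  interpret B: group "B_grp m" by (rule group_B)
  show f: "from_artin x \<in> carrier (B_grp m)" for x by (simp add: from_artin_def carrier_B)
  let ?A = "cls_B [(R1, True)]" and ?T = "cls_B [(R2, True)]"
  have A: "?A \<in> carrier (B_grp m)" and T: "?T \<in> carrier (B_grp m)" by (simp_all add: carrier_B)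
  have g1: "from_artin R1 = ?A" by (simp add: from_artin_def)
  have cancel: "?A \<otimes>\<^bsub>B_grp m\<^esub> (inv\<^bsub>B_grp m\<^esub> ?A \<otimes>\<^bsub>B_grp m\<^esub> ?T) = ?T"
    using A T by (simp add: B.m_assoc[symmetric])
  have "inv\<^bsub>B_grp m\<^esub> ?A = cls_B [(R1, False)]"
    using inv_pres_group_letter[of "rel_M m" R1] by (simp add: B_grp_def)
  then have g2: "from_artin R2 = inv\<^bsub>B_grp m\<^esub> ?A \<otimes>\<^bsub>B_grp m\<^esub> ?T"
    by (simp add: from_artin_def mult_B)
  have "eval_word (B_grp m) from_artin (pos_word (alt_word R1 R2 m))
      = (from_artin R1 \<otimes>\<^bsub>B_grp m\<^esub> from_artin R2) [^]\<^bsub>B_grp m\<^esub> k \<otimes>\<^bsub>B_grp m\<^esub> from_artin R1"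
    using B.eval_word_append[of from_artin, OF f] B.eval_word_pos_concat_replicate[of from_artin, OF f] f by (simp add: alt_word_m)
  also have "from_artin R1 \<otimes>\<^bsub>B_grp m\<^esub> from_artin R2 = ?T"
    by (rule from_artin_R1_R2)
  finally have lhs: "eval_word (B_grp m) from_artin (pos_word (alt_word R1 R2 m))
      = ?T [^]\<^bsub>B_grp m\<^esub> k \<otimes>\<^bsub>B_grp m\<^esub> ?A" by (simp add: g1)
  have "eval_word (B_grp m) from_artin (pos_word (alt_word R2 R1 m))
      = (from_artin R2 \<otimes>\<^bsub>B_grp m\<^esub> from_artin R1) [^]\<^bsub>B_grp m\<^esub> k \<otimes>\<^bsub>B_grp m\<^esub> from_artin R2"
    using B.eval_word_append[of from_artin, OF f] B.eval_word_pos_concat_replicate[of from_artin, OF f] f by (simp add: alt_word_m)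
  also have "\<dots> = (inv\<^bsub>B_grp m\<^esub> ?A \<otimes>\<^bsub>B_grp m\<^esub> ?T \<otimes>\<^bsub>B_grp m\<^esub> ?A) [^]\<^bsub>B_grp m\<^esub> k
      \<otimes>\<^bsub>B_grp m\<^esub> (inv\<^bsub>B_grp m\<^esub> ?A \<otimes>\<^bsub>B_grp m\<^esub> ?T)"
    by (simp only: g1 g2)
  also have "\<dots> = inv\<^bsub>B_grp m\<^esub> ?A \<otimes>\<^bsub>B_grp m\<^esub> ?T [^]\<^bsub>B_grp m\<^esub> k \<otimes>\<^bsub>B_grp m\<^esub> ?A
      \<otimes>\<^bsub>B_grp m\<^esub> (inv\<^bsub>B_grp m\<^esub> ?A \<otimes>\<^bsub>B_grp m\<^esub> ?T)"
    by (simp only: B.conj_nat_pow[OF A T])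
  also have "\<dots> = inv\<^bsub>B_grp m\<^esub> ?A \<otimes>\<^bsub>B_grp m\<^esub> ?T [^]\<^bsub>B_grp m\<^esub> Suc k"
    using A T by (simp add: B.m_assoc cancel)
  also have "\<dots> = ?T [^]\<^bsub>B_grp m\<^esub> k \<otimes>\<^bsub>B_grp m\<^esub> ?A"
    using A T R1_R2_relation_B[symmetric] by (simp add: B.m_assoc[symmetric])
  finally show "case uv of (u, v) \<Rightarrow> eval_word (B_grp m) from_artin (pos_word u) = eval_word (B_grp m) from_artin (pos_word v)"
    if "uv \<in> rel_artin" for uv
    using that lhs by simp
qed

lemma from_artin_to_artin:
  "pres_group_lift (B_grp m) from_artin (to_artin x) = cls_B [(x, True)]"
proof -
  interpret B: group "B_grp m" by (rule group_B)
  have "pres_group_lift (B_grp m) from_artin (to_artin x) = eval_word (B_grp m) from_artin (to_artin_word x)"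
    using pres_group_lift_class[OF group_B from_artin_respects_rels]
    by (simp add: to_artin_def B_grp_def)
  also have "\<dots> = cls_B [(x, True)]"
    using from_artin_R1_R2 by (cases x) (simp_all add: from_artin_def carrier_B)
  finally show ?thesis .
qed

lemma to_artin_from_artin:
  "pres_group_lift (artin_I2 m) to_artin (from_artin y) = cls_A [(y, True)]"
proof -
  have group_A: "group (artin_I2 m)" by (simp add: artin_I2_def group_pres_group)
  interpret A: group "artin_I2 m" by (rule group_A)
  have carrier_A: "cls_A w \<in> carrier (artin_I2 m)" for w
    by (simp add: artin_I2_def carrier_pres_group)
  have mult_A: "cls_A u \<otimes>\<^bsub>artin_I2 m\<^esub> cls_A v = cls_A (u @ v)" for u v
    by (simp add: artin_I2_def mult_pres_group)
  have "pres_group_lift (artin_I2 m) to_artin (from_artin y) = eval_word (artin_I2 m) to_artin (from_artin_word y)"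
    using pres_group_lift_class[OF group_A to_artin_respects_rels]
    by (simp add: from_artin_def artin_I2_def)
  also have "\<dots> = cls_A [(y, True)]"
  proof (cases y)
    case R1
    then show ?thesis by (simp add: to_artin_def carrier_A)
  next
    case R2
    have "inv\<^bsub>artin_I2 m\<^esub> (to_artin R1) = cls_A [(R1, False)]"
      using inv_pres_group_letter[of rel_artin R1] by (simp add: to_artin_def artin_I2_def)
    then have "eval_word (artin_I2 m) to_artin (from_artin_word y)
        = cls_A ([] @ [(R1, False), (R1, True)] @ [(R2, True)])"
      using R2 by (simp add: to_artin_def mult_A carrier_A)
    also have "\<dots> = cls_A [(R2, True)]"
      using pres_cong.ctx[OF pres_cong_cancel_letter[of R1 False rel_artin], of "[]" "[(R2, True)]"]
      by (simp only: pres_class_eq_iff) simp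
    finally show ?thesis using R2 by simp
  qed
  finally show ?thesis .
qed

theorem B_iso_artin: "B_grp m \<cong> artin_I2 m"
  using pres_group_iso[OF to_artin_respects_rels[unfolded artin_I2_def]
      from_artin_respects_rels[unfolded B_grp_def]]
    from_artin_to_artin to_artin_from_artin
  by (simp add: B_grp_def artin_I2_def)

end

theorem proposition6p3:
  fixes m :: nat
  assumes "odd m" and "m \<ge> 3"
  shows "garside_monoid (M_mon m) (Delta m)
       \<and> group_of_fractions (B_grp m) (M_mon m) (pres_incl (rel_M m))
       \<and> B_grp m \<cong> artin_I2 m"
proof -
  obtain k where "m = 2 * k + 1" using assms(1) oddE by blast
  then interpret odd_dihedral m k by unfold_locales
  show ?thesis using garside_M fractions_M B_iso_artin by blast
qed

end
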